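(* Let $\Omega$ be a verification operator for $|\Psi\rangle$ with second largest eigenvalue $\beta$ and smallest eigenvalue $\tau$, and $N\ge1$ an integer. Then $\eta(N,0,\Omega)=\delta_{\mathrm c}$, where $\delta_{\mathrm c}=\beta^N$ if $\tau>0$ and $\delta_{\mathrm c}=\max\{\beta^N,1/(N+1)\}$ if $\tau=0$.
   Context: Let $\mathcal H$ be a Hilbert space of finite dimension $D\ge2$ and $|\Psi\rangle\in\mathcal H$ a unit vector. A verification operator for $|\Psi\rangle$ is a Hermitian operator $\Omega$ on $\mathcal H$ with $0\le\Omega\le1$, $\Omega|\Psi\rangle=|\Psi\rangle$, whose eigenvalue $1$ is nondegenerate. For a density operator $\rho$ on $\mathcal H^{\otimes(N+1)}$ put $p_\rho=\mathrm{tr}[(\Omega^{\otimes N}\otimes1)\rho]$ and $f_\rho=\mathrm{tr}[(\Omega^{\otimes N}\otimes|\Psi\rangle\langle\Psi|)\rho]$, and for $0\le f\le1$ let $\eta(N,f,\Omega)=\max\{p_\rho:f_\rho\le f\}$, the maximum over permutation-invariant density operators on $\mathcal H^{\otimes(N+1)}$. *)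

theory Defs
  imports "HOL-Analysis.Analysis"
begin

text \<open>The Hilbert space H is C^D with
standard basis indexed by {..<D}; vectors are functions nat => complex
(only values on {..<D} matter), operators on H are matrices
nat => nat => complex.  The space H^(tensor n) has the product basis indexed by
lists of length n with entries in {..<D}; operators on it are matrices
nat list => nat list => complex.\<close>

definition basis_idx :: "nat \<Rightarrow> nat \<Rightarrow> nat list set" where
  "basis_idx D n = {xs. length xs = n \<and> set xs \<subseteq> {..<D}}"

definition sqnorm :: "nat \<Rightarrow> (nat \<Rightarrow> complex) \<Rightarrow> real" where
  "sqnorm D v = (\<Sum>i<D. (cmod (v i))\<^sup>2)"

definition hermitian :: "nat \<Rightarrow> (nat \<Rightarrow> nat \<Rightarrow> complex) \<Rightarrow> bool" where
  "hermitian D A \<longleftrightarrow> (\<forall>i<D. \<forall>j<D. A j i = cnj (A i j))"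

definition qform :: "nat \<Rightarrow> (nat \<Rightarrow> nat \<Rightarrow> complex) \<Rightarrow> (nat \<Rightarrow> complex) \<Rightarrow> complex" where
  "qform D A v = (\<Sum>i<D. \<Sum>j<D. cnj (v i) * A i j * v j)"

definition apply_op :: "nat \<Rightarrow> (nat \<Rightarrow> nat \<Rightarrow> complex) \<Rightarrow> (nat \<Rightarrow> complex) \<Rightarrow> nat \<Rightarrow> complex" where
  "apply_op D A v i = (\<Sum>j<D. A i j * v j)"

definition is_eigenvalue :: "nat \<Rightarrow> (nat \<Rightarrow> nat \<Rightarrow> complex) \<Rightarrow> complex \<Rightarrow> bool" where
  "is_eigenvalue D A l \<longleftrightarrow>
     (\<exists>v. (\<exists>i<D. v i \<noteq> 0) \<and> (\<forall>i<D. apply_op D A v i = l * v i))"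

definition verification_operator ::
  "nat \<Rightarrow> (nat \<Rightarrow> nat \<Rightarrow> complex) \<Rightarrow> (nat \<Rightarrow> complex) \<Rightarrow> bool" where
  "verification_operator D \<Omega> \<Psi> \<longleftrightarrow>
     hermitian D \<Omega> \<and>
     (\<forall>v. 0 \<le> Re (qform D \<Omega> v) \<and> Re (qform D \<Omega> v) \<le> sqnorm D v) \<and>
     (\<forall>i<D. apply_op D \<Omega> \<Psi> i = \<Psi> i) \<and>
     (\<forall>v. (\<forall>i<D. apply_op D \<Omega> v i = v i) \<longrightarrow> (\<exists>c. \<forall>i<D. v i = c * \<Psi> i))"

text \<open>beta is the second largest eigenvalue of Omega (counted with multiplicity);
since the eigenvalue 1 is the largest and nondegenerate, this is the largest
eigenvalue different from 1.\<close>
definition second_largest_eigenvalue ::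
  "nat \<Rightarrow> (nat \<Rightarrow> nat \<Rightarrow> complex) \<Rightarrow> real \<Rightarrow> bool" where
  "second_largest_eigenvalue D \<Omega> \<beta> \<longleftrightarrow>
     is_eigenvalue D \<Omega> (complex_of_real \<beta>) \<and> \<beta> \<noteq> 1 \<and>
     (\<forall>l. is_eigenvalue D \<Omega> (complex_of_real l) \<and> l \<noteq> 1 \<longrightarrow> l \<le> \<beta>)"

definition smallest_eigenvalue ::
  "nat \<Rightarrow> (nat \<Rightarrow> nat \<Rightarrow> complex) \<Rightarrow> real \<Rightarrow> bool" where
  "smallest_eigenvalue D \<Omega> \<tau> \<longleftrightarrow>
     is_eigenvalue D \<Omega> (complex_of_real \<tau>) \<and>
     (\<forall>l. is_eigenvalue D \<Omega> l \<longrightarrow> l \<in> \<real> \<and> \<tau> \<le> Re l)"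

definition density_op :: "nat \<Rightarrow> nat \<Rightarrow> (nat list \<Rightarrow> nat list \<Rightarrow> complex) \<Rightarrow> bool" where
  "density_op D n \<rho> \<longleftrightarrow>
     (\<forall>xs\<in>basis_idx D n. \<forall>ys\<in>basis_idx D n. \<rho> ys xs = cnj (\<rho> xs ys)) \<and>
     (\<forall>v. 0 \<le> Re (\<Sum>xs\<in>basis_idx D n. \<Sum>ys\<in>basis_idx D n. cnj (v xs) * \<rho> xs ys * v ys)) \<and>
     (\<Sum>xs\<in>basis_idx D n. \<rho> xs xs) = 1"

text \<open>Permutation invariance: P_pi rho P_pi^dagger = rho for every permutation pi
of the n tensor factors.\<close>
definition perm_invariant :: "nat \<Rightarrow> nat \<Rightarrow> (nat list \<Rightarrow> nat list \<Rightarrow> complex) \<Rightarrow> bool" where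
  "perm_invariant D n \<rho> \<longleftrightarrow>
     (\<forall>\<pi>. \<pi> permutes {..<n} \<longrightarrow>
        (\<forall>xs\<in>basis_idx D n. \<forall>ys\<in>basis_idx D n.
           \<rho> (map (\<lambda>i. xs ! \<pi> i) [0..<n]) (map (\<lambda>i. ys ! \<pi> i) [0..<n]) = \<rho> xs ys))"

definition tensor_op ::
  "nat \<Rightarrow> (nat \<Rightarrow> nat \<Rightarrow> complex) \<Rightarrow> (nat \<Rightarrow> nat \<Rightarrow> complex) \<Rightarrow> nat list \<Rightarrow> nat list \<Rightarrow> complex" where
  "tensor_op N \<Omega> P xs ys = (\<Prod>i<N. \<Omega> (xs ! i) (ys ! i)) * P (xs ! N) (ys ! N)"

definition trace_prod :: "nat \<Rightarrow> nat \<Rightarrow> (nat list \<Rightarrow> nat list \<Rightarrow> complex) \<Rightarrow>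
    (nat list \<Rightarrow> nat list \<Rightarrow> complex) \<Rightarrow> complex" where
  "trace_prod D n A \<rho> = (\<Sum>xs\<in>basis_idx D n. \<Sum>ys\<in>basis_idx D n. A xs ys * \<rho> ys xs)"

definition identity_op :: "nat \<Rightarrow> nat \<Rightarrow> complex" where
  "identity_op i j = (if i = j then 1 else 0)"

definition proj :: "(nat \<Rightarrow> complex) \<Rightarrow> nat \<Rightarrow> nat \<Rightarrow> complex" where
  "proj \<Psi> i j = \<Psi> i * cnj (\<Psi> j)"

definition p_rho where
  "p_rho D N \<Omega> \<rho> = Re (trace_prod D (N+1) (tensor_op N \<Omega> identity_op) \<rho>)"

definition f_rho where
  "f_rho D N \<Omega> \<Psi> \<rho> = Re (trace_prod D (N+1) (tensor_op N \<Omega> (proj \<Psi>)) \<rho>)"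

text \<open>The set over which eta(N,f,Omega) is the maximum.\<close>
definition eta_set where
  "eta_set D N f \<Omega> \<Psi> = {p_rho D N \<Omega> \<rho> | \<rho>.
      density_op D (N+1) \<rho> \<and> perm_invariant D (N+1) \<rho> \<and> f_rho D N \<Omega> \<Psi> \<rho> \<le> f}"

definition is_max_of :: "real set \<Rightarrow> real \<Rightarrow> bool" where
  "is_max_of S x \<longleftrightarrow> x \<in> S \<and> (\<forall>y\<in>S. y \<le> x)"

end

theory Submission
  imports Defs
begin

text \<open>Diagonalise \<open>\<Omega>\<close> in an orthonormal eigenbasis \<open>u\<^sub>0 = \<Psi>, u\<^sub>1, \<dots>, u\<^bsub>D-1\<^esub>\<close> with
  eigenvalues \<open>\<lambda>\<^sub>0 = 1\<close> and \<open>\<lambda>\<^sub>a \<le> \<beta>\<close> for \<open>a > 0\<close>. In the product basis \<open>u\<^sub>s\<close>,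
  \<open>s \<in> {0..D-1}\<^sup>N\<^sup>+\<^sup>1\<close>, both \<open>p\<^sub>\<rho>\<close> and \<open>f\<^sub>\<rho>\<close> only depend on the diagonal weights
  \<open>d(s) = \<langle>u\<^sub>s|\<rho>|u\<^sub>s\<rangle>\<close>, which form a permutation-symmetric probability distribution:
  \<open>p\<^sub>\<rho> = \<Sum>\<^sub>s \<lambda>(s\<^sub>0)\<cdots>\<lambda>(s\<^bsub>N-1\<^esub>) d(s)\<close>, and \<open>f\<^sub>\<rho>\<close> is the part of this sum with \<open>s\<^sub>N = 0\<close>.

  Symmetrising, \<open>(N+1) p\<^sub>\<rho> = \<Sum>\<^sub>s d(s) \<Sum>\<^sub>k c\<^sub>k(s)\<close> with the cofactors
  \<open>c\<^sub>k(s) = \<Prod>\<^bsub>j\<noteq>k\<^esub> \<lambda>(s\<^sub>j)\<close>, and \<open>f\<^sub>\<rho> = 0\<close> forces \<open>c\<^sub>k(s) = 0\<close> whenever \<open>s\<^sub>k = 0\<close> and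
  \<open>d(s) > 0\<close>. If some \<open>\<lambda>(s\<^sub>j)\<close> vanishes (possible only when \<open>\<tau> = 0\<close>), only \<open>c\<^sub>j(s)\<close>
  survives and \<open>\<Sum>\<^sub>k c\<^sub>k(s) \<le> 1\<close>; otherwise no \<open>s\<^sub>k\<close> is \<open>0\<close>, so every \<open>c\<^sub>k(s) \<le> \<beta>\<^sup>N\<close>.
  The bound \<open>\<beta>\<^sup>N\<close> is attained by the product state \<open>u\<^sub>b \<otimes> \<dots> \<otimes> u\<^sub>b\<close> with \<open>\<lambda>\<^sub>b = \<beta>\<close>,
  and \<open>1/(N+1)\<close> by the symmetrisation of \<open>u\<^sub>0 \<otimes> \<dots> \<otimes> u\<^sub>0 \<otimes> u\<^sub>z\<close> with \<open>\<lambda>\<^sub>z = 0\<close>.\<close>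

section \<open>Inner product and orthonormal families in \<open>\<complex>\<^sup>D\<close>\<close>

definition cinner :: "nat \<Rightarrow> (nat \<Rightarrow> complex) \<Rightarrow> (nat \<Rightarrow> complex) \<Rightarrow> complex" where
  "cinner D v w = (\<Sum>i<D. cnj (v i) * w i)"

definition orthonormal :: "nat \<Rightarrow> nat \<Rightarrow> (nat \<Rightarrow> nat \<Rightarrow> complex) \<Rightarrow> bool" where
  "orthonormal D k u \<longleftrightarrow> (\<forall>a<k. \<forall>b<k. cinner D (u a) (u b) = (if a = b then 1 else 0))"

lemma cnj_cinner: "cnj (cinner D v w) = cinner D w v"
  by (simp add: cinner_def mult.commute)

lemma cinner_self: "cinner D v v = of_real (sqnorm D v)"
  by (simp add: cinner_def sqnorm_def complex_norm_square mult.commute del: of_real_power)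

lemma sqnorm_nonneg: "0 \<le> sqnorm D v"
  by (simp add: sqnorm_def sum_nonneg)

lemma sqnorm_eq_0D: "sqnorm D v = 0 \<Longrightarrow> i < D \<Longrightarrow> v i = 0"
  unfolding sqnorm_def by (subst (asm) sum_nonneg_eq_0_iff) auto

lemma cinner_self_eq_0D: "cinner D v v = 0 \<Longrightarrow> i < D \<Longrightarrow> v i = 0"
  using sqnorm_eq_0D[of D v i] by (simp add: cinner_self)

lemma cinner_cong:
  "(\<And>i. i < D \<Longrightarrow> v i = v' i) \<Longrightarrow> (\<And>i. i < D \<Longrightarrow> w i = w' i) \<Longrightarrow> cinner D v w = cinner D v' w'"
  by (simp add: cinner_def)

lemma cinner_zero_left: "(\<And>i. i < D \<Longrightarrow> v i = 0) \<Longrightarrow> cinner D v w = 0"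
  by (simp add: cinner_def)

lemma cinner_add_right: "cinner D y (\<lambda>i. a i + c * b i) = cinner D y a + c * cinner D y b"
  by (simp add: cinner_def sum.distrib sum_distrib_left algebra_simps)

lemma cinner_add_left: "cinner D (\<lambda>i. a i + c * b i) y = cinner D a y + cnj c * cinner D b y"
  by (simp add: cinner_def sum.distrib sum_distrib_left algebra_simps)

lemma cinner_scale_right: "cinner D y (\<lambda>i. c * b i) = c * cinner D y b"
  by (simp add: cinner_def sum_distrib_left algebra_simps)

lemma cinner_scale_left: "cinner D (\<lambda>i. c * b i) y = cnj c * cinner D b y"
  by (simp add: cinner_def sum_distrib_left algebra_simps)

lemma cinner_sum_right: "cinner D y (\<lambda>i. \<Sum>a<k. c a * f a i) = (\<Sum>a<k. c a * cinner D y (f a))"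
  unfolding cinner_def by (simp add: sum_distrib_left sum.swap[of _ "{..<D}"] mult.left_commute)

lemma cinner_sum_left: "cinner D (\<lambda>i. \<Sum>a<k. c a * f a i) y = (\<Sum>a<k. cnj (c a) * cinner D (f a) y)"
  unfolding cinner_def by (simp add: sum_distrib_left sum_distrib_right sum.swap[of _ "{..<D}"] mult.assoc)

lemma cinner_delta_left: "j < D \<Longrightarrow> cinner D (\<lambda>i. if i = j then 1 else 0) v = v j"
  unfolding cinner_def by (subst sum.cong[OF refl, of _ _ "\<lambda>i. if i = j then v j else 0"]) auto

lemma cinner_delta_right: "j < D \<Longrightarrow> cinner D v (\<lambda>i. if i = j then 1 else 0) = cnj (v j)"
  by (simp add: cinner_def if_distrib cong: if_cong)

lemma apply_op_add: "apply_op D A (\<lambda>i. a i + c * b i) j = apply_op D A a j + c * apply_op D A b j"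
  by (simp add: apply_op_def sum.distrib sum_distrib_left algebra_simps)

lemma qform_eq_cinner: "qform D A v = cinner D v (apply_op D A v)"
  by (simp add: qform_def cinner_def apply_op_def sum_distrib_left mult.assoc)

lemma hermitian_cinner_apply_op:
  assumes "hermitian D A"
  shows "cinner D v (apply_op D A w) = cinner D (apply_op D A v) w"
proof -
  have "cinner D v (apply_op D A w) = (\<Sum>i<D. \<Sum>j<D. cnj (v i) * A i j * w j)"
    by (simp add: cinner_def apply_op_def sum_distrib_left mult.assoc)
  also have "\<dots> = (\<Sum>j<D. \<Sum>i<D. cnj (v i) * A i j * w j)"
    by (rule sum.swap)
  also have "\<dots> = cinner D (apply_op D A v) w"
  proof -
    have "\<And>i j. i < D \<Longrightarrow> j < D \<Longrightarrow> cnj (A j i) = A i j"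
      using assms unfolding hermitian_def by (metis complex_cnj_cnj)
    then show ?thesis unfolding cinner_def apply_op_def
      by (simp add: sum_distrib_left sum_distrib_right mult.commute mult.left_commute)
  qed
  finally show ?thesis .
qed

lemma cinner_eigen_left:
  "(\<And>i. i < D \<Longrightarrow> apply_op D A x i = of_real l * x i) \<Longrightarrow>
    cinner D (apply_op D A x) y = of_real l * cinner D x y"
  by (subst cinner_cong[of D _ "\<lambda>i. of_real l * x i" y y]) (simp_all add: cinner_scale_left)

lemma cinner_eigen_right:
  "(\<And>i. i < D \<Longrightarrow> apply_op D A x i = of_real l * x i) \<Longrightarrow>
    cinner D y (apply_op D A x) = of_real l * cinner D y x"
  by (subst cinner_cong[of D y y _ "\<lambda>i. of_real l * x i"]) (simp_all add: cinner_scale_right)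

lemma orthonormal_sqnorm: "orthonormal D k u \<Longrightarrow> a < k \<Longrightarrow> sqnorm D (u a) = 1"
  unfolding orthonormal_def by (metis cinner_self of_real_eq_1_iff)

text \<open>Bessel's inequality in coordinates: subtracting from the basis vector \<open>e\<^sub>j\<close> its
  projection onto the span of an orthonormal family leaves a vector orthogonal to the family
  whose squared norm is \<open>1 - \<Sum>\<^sub>a |u\<^sub>a j|\<^sup>2\<close>.\<close>
lemma orthonormal_residual:
  assumes orth: "orthonormal D k u" and j: "j < D"
  defines "w \<equiv> \<lambda>i. (if i = j then 1 else 0) + (-1) * (\<Sum>a<k. cnj (u a j) * u a i)"
  shows orthonormal_residual_orth: "\<And>b. b < k \<Longrightarrow> cinner D (u b) w = 0"
    and orthonormal_residual_sqnorm: "sqnorm D w = 1 - (\<Sum>a<k. (cmod (u a j))\<^sup>2)"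
proof -
  have proj: "cinner D (u b) (\<lambda>i. \<Sum>a<k. cnj (u a j) * u a i) = cnj (u b j)" if b: "b < k" for b
  proof -
    have "cinner D (u b) (\<lambda>i. \<Sum>a<k. cnj (u a j) * u a i) = (\<Sum>a<k. cnj (u a j) * cinner D (u b) (u a))"
      by (rule cinner_sum_right)
    also have "\<dots> = (\<Sum>a<k. if a = b then cnj (u a j) else 0)"
      using orth b unfolding orthonormal_def by (intro sum.cong) auto
    finally show ?thesis using b by simp
  qed
  show perp: "cinner D (u b) w = 0" if "b < k" for b
    unfolding w_def cinner_add_right using proj[OF that] cinner_delta_right[OF j] by simp
  have "cinner D (\<lambda>i. \<Sum>a<k. cnj (u a j) * u a i) w = (\<Sum>a<k. u a j * cinner D (u a) w)"
    by (simp add: cinner_sum_left)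
  also have "\<dots> = 0" using perp by simp
  finally have "cinner D w w = w j"
    unfolding w_def cinner_add_left using j by (simp add: cinner_delta_left)
  also have "\<dots> = of_real (1 - (\<Sum>a<k. (cmod (u a j))\<^sup>2))"
    using j by (simp add: w_def complex_norm_square mult.commute del: of_real_power)
  finally show "sqnorm D w = 1 - (\<Sum>a<k. (cmod (u a j))\<^sup>2)"
    by (simp only: cinner_self of_real_eq_iff)
qed

lemma orthonormal_sum_cmod_sq:
  assumes "orthonormal D k u"
  shows "(\<Sum>j<D. \<Sum>a<k. (cmod (u a j))\<^sup>2) = real k"
proof -
  have "(\<Sum>j<D. \<Sum>a<k. (cmod (u a j))\<^sup>2) = (\<Sum>a<k. sqnorm D (u a))"
    unfolding sqnorm_def by (rule sum.swap)
  also have "\<dots> = real k"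
    using orthonormal_sqnorm[OF assms] by simp
  finally show ?thesis .
qed

lemma orthonormal_exists_orthogonal:
  assumes orth: "orthonormal D k u" and "k < D"
  shows "\<exists>w. sqnorm D w > 0 \<and> (\<forall>b<k. cinner D (u b) w = 0)"
proof (rule ccontr)
  assume none: "\<not> ?thesis"
  have "(\<Sum>a<k. (cmod (u a j))\<^sup>2) = 1" if j: "j < D" for j
  proof -
    let ?w = "\<lambda>i. (if i = j then 1 else 0) + (-1) * (\<Sum>a<k. cnj (u a j) * u a i)"
    have "\<not> sqnorm D ?w > 0"
      using none orthonormal_residual_orth[OF orth j] by blast
    then show ?thesis
      using orthonormal_residual_sqnorm[OF orth j] sqnorm_nonneg[of D ?w] by linarith
  qed
  then have "real D = real k"
    using orthonormal_sum_cmod_sq[OF orth] by simp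
  with \<open>k < D\<close> show False by simp
qed

text \<open>For a family of \<open>D\<close> vectors the nonnegative residual norms sum to \<open>D - D = 0\<close>.\<close>
lemma orthonormal_complete:
  assumes orth: "orthonormal D D u" and i: "i < D" and j: "j < D"
  shows "(\<Sum>a<D. u a i * cnj (u a j)) = (if i = j then 1 else 0)"
proof -
  define w where "w j = (\<lambda>i. (if i = j then 1 else 0) + (-1) * (\<Sum>a<D. cnj (u a j) * u a i))" for j
  have sq: "sqnorm D (w j) = 1 - (\<Sum>a<D. (cmod (u a j))\<^sup>2)" if "j < D" for j
    unfolding w_def by (rule orthonormal_residual_sqnorm[OF orth that])
  have "(\<Sum>j<D. sqnorm D (w j)) = 0"
    using orthonormal_sum_cmod_sq[OF orth] by (simp add: sq sum_subtractf)
  then have "sqnorm D (w j) = 0"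
    using j by (simp add: sum_nonneg_eq_0_iff sqnorm_nonneg)
  then have "w j i = 0"
    using i by (rule sqnorm_eq_0D)
  then show ?thesis
    by (simp add: w_def mult.commute)
qed

section \<open>Spectral theorem for Hermitian matrices\<close>

lemma sqnorm_unit_coordinate_le_1: "sqnorm D y = 1 \<Longrightarrow> i < D \<Longrightarrow> cmod (y i) \<le> 1"
proof -
  assume y: "sqnorm D y = 1" and i: "i < D"
  have "(cmod (y i))\<^sup>2 \<le> sqnorm D y"
    unfolding sqnorm_def using i by (intro member_le_sum) auto
  with y show ?thesis
    by (simp add: power_le_one_iff abs_square_le_1)
qed

lemma real_linear_le_quadratic:
  fixes r C :: real
  assumes "\<And>t. 2 * t * r \<le> t\<^sup>2 * C"
  shows "r = 0"
proof (rule ccontr)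
  assume r: "r \<noteq> 0"
  define c where "c = \<bar>C\<bar> + 1"
  have c: "c > 0" by (simp add: c_def)
  have "2 * (r / c) * r \<le> (r / c)\<^sup>2 * C" by (rule assms)
  then have "2 * r\<^sup>2 * c \<le> r\<^sup>2 * C"
    using c by (simp add: power2_eq_square field_simps)
  also have "\<dots> \<le> r\<^sup>2 * \<bar>C\<bar>" by (simp add: mult_left_mono)
  finally have "r\<^sup>2 * (\<bar>C\<bar> + 2) \<le> 0" by (simp add: c_def algebra_simps)
  moreover have "r\<^sup>2 * (\<bar>C\<bar> + 2) > 0" using r by simp
  ultimately show False by linarith
qed

definition normalize_vec :: "nat \<Rightarrow> (nat \<Rightarrow> complex) \<Rightarrow> nat \<Rightarrow> complex" where
  "normalize_vec D x i = (if i < D then x i / of_real (sqrt (sqnorm D x)) else 0)"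

lemma cinner_normalize_vec_left:
  "cinner D (normalize_vec D x) y = cinner D x y / of_real (sqrt (sqnorm D x))"
  by (simp add: cinner_def normalize_vec_def sum_divide_distrib)

lemma cinner_normalize_vec_right:
  "cinner D y (normalize_vec D x) = cinner D y x / of_real (sqrt (sqnorm D x))"
  by (simp add: cinner_def normalize_vec_def sum_divide_distrib)

lemma sqnorm_normalize_vec: "sqnorm D x > 0 \<Longrightarrow> sqnorm D (normalize_vec D x) = 1"
  using cinner_normalize_vec_left[of D x "normalize_vec D x"]
  by (simp add: cinner_normalize_vec_right cinner_self flip: of_real_mult of_real_divide)

lemma qform_normalize_vec:
  "Re (qform D A (normalize_vec D x)) = Re (qform D A x) / sqnorm D x"
proof -
  let ?c = "complex_of_real (sqrt (sqnorm D x))"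
  have "apply_op D A (normalize_vec D x) = (\<lambda>j. inverse ?c * apply_op D A x j)"
    by (auto simp: apply_op_def normalize_vec_def sum_divide_distrib field_simps)
  then have "qform D A (normalize_vec D x) = inverse ?c * qform D A x / ?c"
    by (simp only: qform_eq_cinner cinner_normalize_vec_left cinner_scale_right times_divide_eq_right)
  also have "\<dots> = qform D A x / (?c * ?c)"
    by (simp add: field_simps)
  also have "?c * ?c = of_real (sqnorm D x)"
    by (simp flip: of_real_mult add: sqnorm_nonneg)
  finally show ?thesis
    by (simp add: Re_divide_of_real)
qed

lemma continuous_on_coordinate [continuous_intros]: "continuous_on S (\<lambda>x::nat \<Rightarrow> complex. x i)"
  by (rule continuous_on_subset[OF continuous_on_product_coordinates]) auto

lemma compact_coordinate_box:
  "compact (PiE UNIV (\<lambda>i::nat. if i < D then cball (0::complex) 1 else {0}))"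
proof -
  have "compactin (product_topology (\<lambda>i. euclidean) UNIV)
      (PiE UNIV (\<lambda>i::nat. if i < D then cball (0::complex) 1 else {0}))"
    by (subst compactin_PiE) auto
  then show ?thesis
    by (simp add: euclidean_product_topology)
qed

text \<open>Vectors are functions on all of \<open>nat\<close>, so the maximum of the quadratic form is taken
  over the unit sphere inside the compact box of vectors vanishing from \<open>D\<close> on.\<close>
lemma qform_max_on_orthogonal_complement:
  assumes orth: "orthonormal D k u" and "k < D"
  shows "\<exists>v. sqnorm D v = 1 \<and> (\<forall>a<k. cinner D (u a) v = 0) \<and>
    (\<forall>x. (\<forall>a<k. cinner D (u a) x = 0) \<longrightarrow> Re (qform D A x) \<le> Re (qform D A v) * sqnorm D x)"
proof -
  define S where "S = PiE UNIV (\<lambda>i::nat. if i < D then cball (0::complex) 1 else {0}) \<inter>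
    {x. sqnorm D x = 1} \<inter> (\<Inter>a\<in>{..<k}. {x. cinner D (u a) x = 0})"
  have normalize_in_S: "normalize_vec D x \<in> S"
    if "sqnorm D x > 0" "\<forall>a<k. cinner D (u a) x = 0" for x
    using that sqnorm_normalize_vec[of D x] sqnorm_unit_coordinate_le_1[of D "normalize_vec D x"]
    by (auto simp: S_def PiE_def extensional_def normalize_vec_def cinner_normalize_vec_right)
  have "compact S"
    unfolding S_def sqnorm_def cinner_def
    by (intro compact_Int_closed compact_coordinate_box closed_INT ballI closed_Collect_eq
        continuous_intros)
  moreover have "S \<noteq> {}"
    using orthonormal_exists_orthogonal[OF assms] normalize_in_S by blast
  moreover have "continuous_on S (\<lambda>x. Re (qform D A x))"
    unfolding qform_def by (intro continuous_intros)
  ultimately obtain v where v: "v \<in> S" and v_max: "\<And>y. y \<in> S \<Longrightarrow> Re (qform D A y) \<le> Re (qform D A v)"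
    using continuous_attains_sup by metis
  have "Re (qform D A x) \<le> Re (qform D A v) * sqnorm D x"
    if perp: "\<forall>a<k. cinner D (u a) x = 0" for x
  proof (cases "sqnorm D x = 0")
    case True
    then have "qform D A x = 0"
      unfolding qform_eq_cinner by (intro cinner_zero_left sqnorm_eq_0D)
    with True show ?thesis by simp
  next
    case False
    then have pos: "sqnorm D x > 0"
      using sqnorm_nonneg[of D x] by linarith
    have "Re (qform D A x) / sqnorm D x \<le> Re (qform D A v)"
      using v_max[OF normalize_in_S[OF pos perp]] by (simp add: qform_normalize_vec)
    with pos show ?thesis
      by (simp add: divide_le_eq)
  qed
  with v show ?thesis
    unfolding S_def by blast
qed

text \<open>First variation: \<open>v + t y\<close> stays orthogonal to the \<open>u\<^sub>a\<close>, so maximality gives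
  \<open>2 t Re \<langle>y, A v\<rangle> \<le> C t\<^sup>2\<close> for all real \<open>t\<close>; replacing \<open>y\<close> by \<open>\<i> y\<close> handles the imaginary part.\<close>
lemma qform_maximizer_variation:
  assumes herm: "hermitian D A"
    and v_unit: "sqnorm D v = 1" and v_perp: "\<forall>a<k. cinner D (u a) v = 0"
    and v_max: "\<And>x. \<forall>a<k. cinner D (u a) x = 0 \<Longrightarrow> Re (qform D A x) \<le> Re (qform D A v) * sqnorm D x"
    and y_perp: "\<forall>a<k. cinner D (u a) y = 0" and yv: "cinner D v y = 0"
  shows "cinner D y (apply_op D A v) = 0"
proof -
  have re: "Re (cinner D y (apply_op D A v)) = 0"
    if y_perp: "\<forall>a<k. cinner D (u a) y = 0" and yv: "cinner D v y = 0" for y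
  proof (rule real_linear_le_quadratic)
    fix t :: real
    define x where "x = (\<lambda>i. v i + of_real t * y i)"
    have yv': "cinner D y v = 0"
      using yv cnj_cinner[of D v y] by simp
    have "of_real (sqnorm D x) = cinner D x x"
      by (simp add: cinner_self)
    also have "\<dots> = of_real (1 + t * t * sqnorm D y)"
      unfolding x_def by (simp add: cinner_add_left cinner_add_right v_unit yv yv' cinner_self)
    finally have x_norm: "sqnorm D x = 1 + t * t * sqnorm D y"
      by (simp only: of_real_eq_iff)
    have "apply_op D A x = (\<lambda>i. apply_op D A v i + of_real t * apply_op D A y i)"
      unfolding x_def by (rule ext) (rule apply_op_add)
    moreover have "cinner D v (apply_op D A y) = cnj (cinner D y (apply_op D A v))"
      by (simp add: hermitian_cinner_apply_op[OF herm] cnj_cinner)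
    ultimately have "qform D A x = qform D A v + of_real t * cinner D y (apply_op D A v)
        + of_real t * (cnj (cinner D y (apply_op D A v)) + of_real t * qform D A y)"
      unfolding qform_eq_cinner x_def by (simp add: cinner_add_left cinner_add_right algebra_simps)
    then have "Re (qform D A x) = Re (qform D A v) + 2 * t * Re (cinner D y (apply_op D A v))
        + t\<^sup>2 * Re (qform D A y)"
      by (simp add: power2_eq_square algebra_simps)
    moreover have "Re (qform D A x) \<le> Re (qform D A v) * sqnorm D x"
      using y_perp v_perp by (intro v_max) (simp add: x_def cinner_add_right)
    ultimately show "2 * t * Re (cinner D y (apply_op D A v))
        \<le> t\<^sup>2 * (Re (qform D A v) * sqnorm D y - Re (qform D A y))"
      by (simp add: x_norm power2_eq_square algebra_simps)
  qed
  have "Re (cinner D (\<lambda>i. \<i> * y i) (apply_op D A v)) = 0"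
    by (rule re) (use y_perp yv in \<open>simp_all add: cinner_scale_right\<close>)
  then have "Im (cinner D y (apply_op D A v)) = 0"
    by (simp add: cinner_scale_left)
  with re[OF y_perp yv] show ?thesis
    by (simp add: complex_eq_iff)
qed

lemma hermitian_qform_real:
  assumes "hermitian D A"
  shows "of_real (Re (qform D A v)) = qform D A v"
proof -
  have "cnj (qform D A v) = qform D A v"
    using hermitian_cinner_apply_op[OF assms, of v v] cnj_cinner[of D v "apply_op D A v"]
    by (simp add: qform_eq_cinner)
  then show ?thesis
    by (simp add: complex_eq_iff)
qed

text \<open>The first-order condition at the maximiser: \<open>A v - \<langle>v, A v\<rangle> v\<close> is orthogonal to
  the eigenvectors \<open>u\<^sub>a\<close> (as \<open>A\<close> is Hermitian) and to \<open>v\<close>, hence to \<open>A v\<close> as well, so it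
  is orthogonal to itself.\<close>
lemma qform_maximizer_eigenvector:
  assumes herm: "hermitian D A"
    and eig: "\<forall>a<k. \<forall>i<D. apply_op D A (u a) i = of_real (lam a) * u a i"
    and v_unit: "sqnorm D v = 1" and v_perp: "\<forall>a<k. cinner D (u a) v = 0"
    and v_max: "\<And>x. \<forall>a<k. cinner D (u a) x = 0 \<Longrightarrow> Re (qform D A x) \<le> Re (qform D A v) * sqnorm D x"
  shows "\<forall>i<D. apply_op D A v i = of_real (Re (qform D A v)) * v i"
proof -
  define c where "c = qform D A v"
  define y where "y = (\<lambda>i. apply_op D A v i + (- c) * v i)"
  have "\<forall>a<k. cinner D (u a) y = 0"
  proof (intro allI impI)
    fix a assume a: "a < k"
    have "cinner D (u a) (apply_op D A v) = cinner D (apply_op D A (u a)) v"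
      by (rule hermitian_cinner_apply_op[OF herm])
    also have "\<dots> = of_real (lam a) * cinner D (u a) v"
      using eig a by (intro cinner_eigen_left) simp
    finally show "cinner D (u a) y = 0"
      using a v_perp unfolding y_def cinner_add_right by simp
  qed
  moreover have yv: "cinner D v y = 0"
    using v_unit unfolding y_def cinner_add_right by (simp add: c_def qform_eq_cinner cinner_self)
  ultimately have "cinner D y (apply_op D A v) = 0"
    using qform_maximizer_variation[OF herm v_unit v_perp v_max] by blast
  moreover have "cinner D y v = 0"
    using yv cnj_cinner[of D v y] by simp
  moreover have "cinner D y y = cinner D y (apply_op D A v) + (- c) * cinner D y v"
    by (subst (2) y_def) (rule cinner_add_right)
  ultimately have "cinner D y y = 0"
    by simp
  then have "\<forall>i<D. y i = 0"
    using cinner_self_eq_0D by blast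
  then show ?thesis
    using hermitian_qform_real[OF herm, of v] by (simp add: y_def c_def)
qed

lemma hermitian_orthonormal_eigenvectors:
  assumes herm: "hermitian D A" and psi: "sqnorm D \<Psi> = 1"
    and eig_psi: "\<forall>i<D. apply_op D A \<Psi> i = of_real l * \<Psi> i"
    and "1 \<le> k" "k \<le> D"
  shows "\<exists>u lam. u 0 = \<Psi> \<and> lam 0 = l \<and> orthonormal D k u \<and>
    (\<forall>a<k. \<forall>i<D. apply_op D A (u a) i = of_real (lam a) * u a i)"
  using assms(4,5)
proof (induction k)
  case 0
  then show ?case by simp
next
  case (Suc k)
  show ?case
  proof (cases "k = 0")
    case True
    then show ?thesis
      using psi eig_psi
      by (intro exI[of _ "\<lambda>_. \<Psi>"] exI[of _ "\<lambda>_. l"]) (simp add: orthonormal_def cinner_self)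
  next
    case False
    with Suc obtain u lam where u0: "u 0 = \<Psi>" and lam0: "lam 0 = l" and orth: "orthonormal D k u"
      and eig: "\<forall>a<k. \<forall>i<D. apply_op D A (u a) i = of_real (lam a) * u a i"
      by auto
    have "k < D"
      using Suc.prems by simp
    then obtain v where v_unit: "sqnorm D v = 1" and v_perp: "\<forall>a<k. cinner D (u a) v = 0"
      and v_max: "\<And>x. \<forall>a<k. cinner D (u a) x = 0 \<Longrightarrow> Re (qform D A x) \<le> Re (qform D A v) * sqnorm D x"
      using qform_max_on_orthogonal_complement[OF orth, where A = A] by blast
    have v_eig: "\<forall>i<D. apply_op D A v i = of_real (Re (qform D A v)) * v i"
      by (rule qform_maximizer_eigenvector[OF herm eig v_unit v_perp v_max])
    have v_perp': "\<forall>a<k. cinner D v (u a) = 0"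
    proof (intro allI impI)
      fix a assume "a < k"
      then show "cinner D v (u a) = 0"
        using v_perp cnj_cinner[of D "u a" v] by simp
    qed
    have "orthonormal D (Suc k) (u(k := v))"
      using orth v_unit v_perp v_perp' unfolding orthonormal_def
      by (auto simp: less_Suc_eq cinner_self)
    moreover have "\<forall>a<Suc k. \<forall>i<D. apply_op D A ((u(k := v)) a) i
        = of_real ((lam(k := Re (qform D A v))) a) * (u(k := v)) a i"
      using eig v_eig by (auto simp: less_Suc_eq)
    moreover have "(u(k := v)) 0 = \<Psi>" "(lam(k := Re (qform D A v))) 0 = l"
      using False u0 lam0 by auto
    ultimately show ?thesis
      by blast
  qed
qed

lemma orthonormal_expansion:
  assumes "orthonormal D D u" and "i < D"
  shows "v i = (\<Sum>a<D. u a i * cinner D (u a) v)"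
proof -
  have "(\<Sum>a<D. u a i * cinner D (u a) v) = (\<Sum>a<D. \<Sum>j<D. u a i * cnj (u a j) * v j)"
    by (simp add: cinner_def sum_distrib_left mult.assoc)
  also have "\<dots> = (\<Sum>j<D. (\<Sum>a<D. u a i * cnj (u a j)) * v j)"
    by (subst sum.swap) (simp add: sum_distrib_right)
  also have "\<dots> = (\<Sum>j<D. if j = i then v j else 0)"
    using orthonormal_complete[OF assms] by (intro sum.cong) auto
  finally show ?thesis
    using assms(2) by simp
qed

lemma eigenbasis_decomposition:
  assumes orth: "orthonormal D D u"
    and eig: "\<forall>a<D. \<forall>i<D. apply_op D A (u a) i = of_real (lam a) * u a i"
    and i: "i < D" and j: "j < D"
  shows "A i j = (\<Sum>a<D. of_real (lam a) * u a i * cnj (u a j))"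
proof -
  have "(\<Sum>a<D. of_real (lam a) * u a i * cnj (u a j)) = (\<Sum>a<D. apply_op D A (u a) i * cnj (u a j))"
    using eig i by simp
  also have "\<dots> = (\<Sum>a<D. \<Sum>l<D. A i l * (u a l * cnj (u a j)))"
    by (simp add: apply_op_def sum_distrib_right mult.assoc)
  also have "\<dots> = (\<Sum>l<D. A i l * (\<Sum>a<D. u a l * cnj (u a j)))"
    by (subst sum.swap) (simp add: sum_distrib_left)
  also have "\<dots> = (\<Sum>l<D. if l = j then A i l else 0)"
    using orthonormal_complete[OF orth _ j] by (intro sum.cong) auto
  finally show ?thesis
    using j by simp
qed

lemma eigenbasis_is_eigenvalue:
  assumes "orthonormal D D u" and "\<forall>a<D. \<forall>i<D. apply_op D A (u a) i = of_real (lam a) * u a i"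
    and "a < D"
  shows "is_eigenvalue D A (of_real (lam a))"
proof -
  have "\<exists>i<D. u a i \<noteq> 0"
  proof (rule ccontr)
    assume "\<not> ?thesis"
    then have "sqnorm D (u a) = 0"
      by (simp add: sqnorm_def)
    with orthonormal_sqnorm[OF assms(1,3)] show False
      by simp
  qed
  with assms show ?thesis
    unfolding is_eigenvalue_def by blast
qed

lemma eigenvalue_in_eigenbasis:
  assumes herm: "hermitian D A" and orth: "orthonormal D D u"
    and eig: "\<forall>a<D. \<forall>i<D. apply_op D A (u a) i = of_real (lam a) * u a i"
    and "is_eigenvalue D A \<mu>"
  shows "\<exists>a<D. of_real (lam a) = \<mu>"
proof -
  obtain v i where i: "i < D" "v i \<noteq> 0" and v_eig: "\<forall>i<D. apply_op D A v i = \<mu> * v i"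
    using assms(4) unfolding is_eigenvalue_def by blast
  have "\<exists>a<D. cinner D (u a) v \<noteq> 0"
  proof (rule ccontr)
    assume "\<not> ?thesis"
    then have "v i = 0"
      using orthonormal_expansion[OF orth i(1), of v] by simp
    with i(2) show False ..
  qed
  then obtain a where a: "a < D" "cinner D (u a) v \<noteq> 0"
    by blast
  have "of_real (lam a) * cinner D (u a) v = cinner D (apply_op D A (u a)) v"
    by (rule cinner_eigen_left[symmetric]) (use eig a in simp)
  also have "\<dots> = cinner D (u a) (apply_op D A v)"
    by (rule hermitian_cinner_apply_op[OF herm, symmetric])
  also have "\<dots> = cinner D (u a) (\<lambda>i. \<mu> * v i)"
    using v_eig by (intro cinner_cong) auto
  also have "\<dots> = \<mu> * cinner D (u a) v"
    by (rule cinner_scale_right)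
  finally show ?thesis
    using a by auto
qed

lemma qform_eigenbasis:
  assumes "orthonormal D D u" and "\<forall>a<D. \<forall>i<D. apply_op D A (u a) i = of_real (lam a) * u a i"
    and "a < D"
  shows "Re (qform D A (u a)) = lam a"
proof -
  have "qform D A (u a) = of_real (lam a) * cinner D (u a) (u a)"
    unfolding qform_eq_cinner using assms(2,3) by (intro cinner_eigen_right) simp
  with assms(1,3) show ?thesis
    by (simp add: orthonormal_def)
qed

lemma eigenbasis_eigenvalue_ne_first:
  assumes orth: "orthonormal D D u"
    and eig: "\<forall>a<D. \<forall>i<D. apply_op D A (u a) i = of_real (lam a) * u a i"
    and simple: "\<And>v. \<forall>i<D. apply_op D A v i = v i \<Longrightarrow> \<exists>c. \<forall>i<D. v i = c * u 0 i"
    and a: "0 < a" "a < D"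
  shows "lam a \<noteq> 1"
proof
  assume "lam a = 1"
  then obtain c where c: "\<forall>i<D. u a i = c * u 0 i"
    using simple[of "u a"] eig a by auto
  have "cinner D (u 0) (u a) = c * cinner D (u 0) (u 0)"
    using c by (simp add: cinner_cong[of D _ "u 0" _ "\<lambda>i. c * u 0 i"] cinner_scale_right)
  then have "c = 0"
    using orth a unfolding orthonormal_def by auto
  with c orthonormal_sqnorm[OF orth \<open>a < D\<close>] show False
    by (simp add: sqnorm_def)
qed

section \<open>The product basis of \<open>\<H>\<^sup>\<otimes>\<^sup>n\<close>\<close>

lemma finite_basis_idx [simp]: "finite (basis_idx D n)"
proof -
  have "basis_idx D n = {xs. set xs \<subseteq> {..<D} \<and> length xs = n}"
    by (auto simp: basis_idx_def)
  then show ?thesis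
    using finite_lists_length_eq[of "{..<D}" n] by simp
qed

lemma basis_idx_Suc: "basis_idx D (Suc n) = (\<lambda>(i, xs). i # xs) ` ({..<D} \<times> basis_idx D n)"
proof
  show "basis_idx D (Suc n) \<subseteq> (\<lambda>(i, xs). i # xs) ` ({..<D} \<times> basis_idx D n)"
  proof
    fix xs assume "xs \<in> basis_idx D (Suc n)"
    then obtain y ys where "xs = y # ys" "length ys = n" "y < D" "set ys \<subseteq> {..<D}"
      by (cases xs) (auto simp: basis_idx_def)
    then show "xs \<in> (\<lambda>(i, xs). i # xs) ` ({..<D} \<times> basis_idx D n)"
      by (auto simp: basis_idx_def image_iff)
  qed
qed (auto simp: basis_idx_def)

lemma basis_idx_nth_less: "xs \<in> basis_idx D n \<Longrightarrow> k < n \<Longrightarrow> xs ! k < D"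
  unfolding basis_idx_def using nth_mem by fastforce

lemma basis_idx_eq_iff:
  "s \<in> basis_idx D n \<Longrightarrow> t \<in> basis_idx D n \<Longrightarrow> (\<forall>k<n. s ! k = t ! k) \<longleftrightarrow> s = t"
  by (auto simp: basis_idx_def intro: nth_equalityI)

lemma sum_basis_idx_prod:
  "(\<Sum>xs\<in>basis_idx D n. \<Prod>k<n. g k (xs ! k)) = (\<Prod>k<n. \<Sum>i<D. (g k i :: complex))"
proof (induction n arbitrary: g)
  case 0
  have "basis_idx D 0 = {[]}"
    by (auto simp: basis_idx_def)
  then show ?case by simp
next
  case (Suc n)
  have inj: "inj_on (\<lambda>(i, xs). i # xs) ({..<D} \<times> basis_idx D n)"
    by (auto simp: inj_on_def)
  have "(\<Sum>xs\<in>basis_idx D (Suc n). \<Prod>k<Suc n. g k (xs ! k))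
      = (\<Sum>(i, xs)\<in>{..<D} \<times> basis_idx D n. \<Prod>k<Suc n. g k ((i # xs) ! k))"
    unfolding basis_idx_Suc by (subst sum.reindex[OF inj]) (simp add: case_prod_unfold)
  also have "\<dots> = (\<Sum>i<D. \<Sum>xs\<in>basis_idx D n. g 0 i * (\<Prod>k<n. g (Suc k) (xs ! k)))"
    by (subst sum.cartesian_product[symmetric]) (simp del: prod.lessThan_Suc add: prod.lessThan_Suc_shift)
  also have "\<dots> = (\<Sum>i<D. g 0 i * (\<Prod>k<n. \<Sum>i<D. g (Suc k) i))"
    by (simp add: sum_distrib_left[symmetric] Suc.IH[of "\<lambda>k. g (Suc k)"])
  also have "\<dots> = (\<Prod>k<Suc n. \<Sum>i<D. g k i)"
    by (simp del: prod.lessThan_Suc add: prod.lessThan_Suc_shift sum_distrib_right)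
  finally show ?case .
qed

lemma prod_indicator: "(\<Prod>k<(n::nat). if P k then 1 else (0::complex)) = (if \<forall>k<n. P k then 1 else 0)"
  by (induction n) (auto simp: less_Suc_eq)

definition tensor_vec :: "(nat \<Rightarrow> nat \<Rightarrow> complex) \<Rightarrow> nat \<Rightarrow> nat list \<Rightarrow> nat list \<Rightarrow> complex" where
  "tensor_vec u n s xs = (\<Prod>k<n. u (s ! k) (xs ! k))"

definition diag_weight ::
  "nat \<Rightarrow> (nat \<Rightarrow> nat \<Rightarrow> complex) \<Rightarrow> nat \<Rightarrow> (nat list \<Rightarrow> nat list \<Rightarrow> complex) \<Rightarrow> nat list \<Rightarrow> complex" where
  "diag_weight D u n \<rho> s = (\<Sum>xs\<in>basis_idx D n. \<Sum>ys\<in>basis_idx D n.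
     cnj (tensor_vec u n s xs) * \<rho> xs ys * tensor_vec u n s ys)"

lemma tensor_vec_orthonormal:
  assumes orth: "orthonormal D D u" and s: "s \<in> basis_idx D n" and t: "t \<in> basis_idx D n"
  shows "(\<Sum>xs\<in>basis_idx D n. cnj (tensor_vec u n s xs) * tensor_vec u n t xs) = (if s = t then 1 else 0)"
proof -
  have "(\<Sum>xs\<in>basis_idx D n. cnj (tensor_vec u n s xs) * tensor_vec u n t xs)
      = (\<Prod>k<n. cinner D (u (s ! k)) (u (t ! k)))"
    by (simp add: tensor_vec_def cinner_def flip: prod.distrib sum_basis_idx_prod)
  also have "\<dots> = (\<Prod>k<n. if s ! k = t ! k then 1 else 0)"
    using basis_idx_nth_less[OF s] basis_idx_nth_less[OF t] orth
    by (intro prod.cong refl) (auto simp: orthonormal_def)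
  also have "\<dots> = (if s = t then 1 else 0)"
    by (simp add: prod_indicator basis_idx_eq_iff[OF s t])
  finally show ?thesis .
qed

lemma tensor_vec_complete:
  assumes orth: "orthonormal D D u" and xs: "xs \<in> basis_idx D n" and ys: "ys \<in> basis_idx D n"
  shows "(\<Sum>s\<in>basis_idx D n. tensor_vec u n s xs * cnj (tensor_vec u n s ys)) = (if xs = ys then 1 else 0)"
proof -
  have "(\<Sum>s\<in>basis_idx D n. tensor_vec u n s xs * cnj (tensor_vec u n s ys))
      = (\<Prod>k<n. \<Sum>a<D. u a (xs ! k) * cnj (u a (ys ! k)))"
    by (simp add: tensor_vec_def flip: prod.distrib sum_basis_idx_prod)
  also have "\<dots> = (\<Prod>k<n. if xs ! k = ys ! k then 1 else 0)"
    using basis_idx_nth_less[OF xs] basis_idx_nth_less[OF ys] orthonormal_complete[OF orth]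
    by (intro prod.cong refl) auto
  also have "\<dots> = (if xs = ys then 1 else 0)"
    by (simp add: prod_indicator basis_idx_eq_iff[OF xs ys])
  finally show ?thesis .
qed

lemma tensor_op_decomposition:
  assumes M: "\<And>k i j. k < n \<Longrightarrow> i < D \<Longrightarrow> j < D \<Longrightarrow> M k i j = (\<Sum>a<D. m k a * u a i * cnj (u a j))"
    and xs: "xs \<in> basis_idx D n" and ys: "ys \<in> basis_idx D n"
  shows "(\<Prod>k<n. M k (xs ! k) (ys ! k))
    = (\<Sum>s\<in>basis_idx D n. (\<Prod>k<n. m k (s ! k)) * tensor_vec u n s xs * cnj (tensor_vec u n s ys))"
proof -
  have "(\<Prod>k<n. M k (xs ! k) (ys ! k)) = (\<Prod>k<n. \<Sum>a<D. m k a * u a (xs ! k) * cnj (u a (ys ! k)))"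
    using basis_idx_nth_less[OF xs] basis_idx_nth_less[OF ys] M by (intro prod.cong refl) auto
  also have "\<dots> = (\<Sum>s\<in>basis_idx D n. (\<Prod>k<n. m k (s ! k)) * tensor_vec u n s xs * cnj (tensor_vec u n s ys))"
    by (simp add: tensor_vec_def flip: prod.distrib sum_basis_idx_prod)
  finally show ?thesis .
qed

lemma trace_prod_diagonal:
  assumes "\<And>xs ys. xs \<in> basis_idx D n \<Longrightarrow> ys \<in> basis_idx D n \<Longrightarrow>
    A xs ys = (\<Sum>s\<in>basis_idx D n. c s * tensor_vec u n s xs * cnj (tensor_vec u n s ys))"
  shows "trace_prod D n A \<rho> = (\<Sum>s\<in>basis_idx D n. c s * diag_weight D u n \<rho> s)"
proof -
  let ?B = "basis_idx D n"
  have "trace_prod D n A \<rho>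
      = (\<Sum>xs\<in>?B. \<Sum>ys\<in>?B. \<Sum>s\<in>?B. c s * tensor_vec u n s xs * cnj (tensor_vec u n s ys) * \<rho> ys xs)"
    unfolding trace_prod_def using assms by (simp add: sum_distrib_right)
  also have "\<dots> = (\<Sum>s\<in>?B. \<Sum>ys\<in>?B. \<Sum>xs\<in>?B.
      c s * (cnj (tensor_vec u n s ys) * \<rho> ys xs * tensor_vec u n s xs))"
    by (subst sum.swap, subst (2) sum.swap, subst sum.swap) (simp add: ac_simps)
  also have "\<dots> = (\<Sum>s\<in>?B. c s * diag_weight D u n \<rho> s)"
    by (simp add: diag_weight_def sum_distrib_left)
  finally show ?thesis .
qed

lemma sum_diag_weight:
  assumes "orthonormal D D u"
  shows "(\<Sum>s\<in>basis_idx D n. diag_weight D u n \<rho> s) = (\<Sum>xs\<in>basis_idx D n. \<rho> xs xs)"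
proof -
  let ?B = "basis_idx D n"
  have "(\<Sum>s\<in>?B. diag_weight D u n \<rho> s)
      = (\<Sum>xs\<in>?B. \<Sum>s\<in>?B. \<Sum>ys\<in>?B. cnj (tensor_vec u n s xs) * \<rho> xs ys * tensor_vec u n s ys)"
    unfolding diag_weight_def by (rule sum.swap)
  also have "\<dots> = (\<Sum>xs\<in>?B. \<Sum>ys\<in>?B. \<rho> xs ys * (\<Sum>s\<in>?B. tensor_vec u n s ys * cnj (tensor_vec u n s xs)))"
    by (rule sum.cong[OF refl], subst sum.swap) (simp add: sum_distrib_left ac_simps)
  also have "\<dots> = (\<Sum>xs\<in>?B. \<Sum>ys\<in>?B. if ys = xs then \<rho> xs ys else 0)"
    using tensor_vec_complete[OF assms] by (intro sum.cong refl) auto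
  finally show ?thesis
    by simp
qed

lemma diag_weight_nonneg: "density_op D n \<rho> \<Longrightarrow> 0 \<le> Re (diag_weight D u n \<rho> s)"
  unfolding density_op_def diag_weight_def by blast

lemma permute_list_basis_idx:
  "\<pi> permutes {..<n} \<Longrightarrow> xs \<in> basis_idx D n \<Longrightarrow> permute_list \<pi> xs \<in> basis_idx D n"
  by (simp add: basis_idx_def)

lemma permute_list_inv_cancel:
  assumes "\<pi> permutes {..<n}" and "xs \<in> basis_idx D n"
  shows "permute_list (inv \<pi>) (permute_list \<pi> xs) = xs"
proof -
  have "inv \<pi> permutes {..<length xs}"
    using assms permutes_inv by (simp add: basis_idx_def)
  then have "permute_list (inv \<pi>) (permute_list \<pi> xs) = permute_list (\<pi> \<circ> inv \<pi>) xs"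
    by (rule permute_list_compose[symmetric])
  also have "\<pi> \<circ> inv \<pi> = id"
    using assms(1) by (rule permutes_inv_o(1))
  finally show ?thesis
    by simp
qed

lemma bij_betw_permute_list:
  assumes p: "\<pi> permutes {..<n}"
  shows "bij_betw (permute_list \<pi>) (basis_idx D n) (basis_idx D n)"
proof (rule bij_betw_byWitness[where f' = "permute_list (inv \<pi>)"])
  have p': "inv \<pi> permutes {..<n}"
    by (rule permutes_inv[OF p])
  show "\<forall>xs\<in>basis_idx D n. permute_list (inv \<pi>) (permute_list \<pi> xs) = xs"
    using permute_list_inv_cancel[OF p] by blast
  show "\<forall>xs\<in>basis_idx D n. permute_list \<pi> (permute_list (inv \<pi>) xs) = xs"
    using permute_list_inv_cancel[OF p'] p by (simp add: permutes_inv_inv)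
  show "permute_list \<pi> ` basis_idx D n \<subseteq> basis_idx D n"
    "permute_list (inv \<pi>) ` basis_idx D n \<subseteq> basis_idx D n"
    using permute_list_basis_idx[OF p] permute_list_basis_idx[OF p'] by blast+
qed

lemma sum_permute_list:
  "\<pi> permutes {..<n} \<Longrightarrow> (\<Sum>xs\<in>basis_idx D n. g (permute_list \<pi> xs)) = (\<Sum>xs\<in>basis_idx D n. g xs)"
  using sum.reindex_bij_betw[OF bij_betw_permute_list] .

lemma permute_list_mem_iff:
  assumes "\<pi> permutes {..<n}" and "xs \<in> basis_idx D n"
    and E: "\<And>\<sigma> t. \<sigma> permutes {..<n} \<Longrightarrow> t \<in> E \<Longrightarrow> permute_list \<sigma> t \<in> E"
  shows "permute_list \<pi> xs \<in> E \<longleftrightarrow> xs \<in> E"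
  using E[OF assms(1), of xs] E[OF permutes_inv[OF assms(1)], of "permute_list \<pi> xs"]
    permute_list_inv_cancel[OF assms(1,2)]
  by auto

lemma perm_invariant_iff:
  "perm_invariant D n \<rho> \<longleftrightarrow> (\<forall>\<pi>. \<pi> permutes {..<n} \<longrightarrow> (\<forall>xs\<in>basis_idx D n. \<forall>ys\<in>basis_idx D n.
     \<rho> (permute_list \<pi> xs) (permute_list \<pi> ys) = \<rho> xs ys))"
  by (simp add: perm_invariant_def permute_list_def basis_idx_def)

lemma tensor_vec_permute_list:
  assumes "\<pi> permutes {..<n}" and "s \<in> basis_idx D n" and "xs \<in> basis_idx D n"
  shows "tensor_vec u n (permute_list \<pi> s) (permute_list \<pi> xs) = tensor_vec u n s xs"
proof -
  have "tensor_vec u n (permute_list \<pi> s) (permute_list \<pi> xs) = (\<Prod>k<n. u (s ! \<pi> k) (xs ! \<pi> k))"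
    using assms unfolding tensor_vec_def by (intro prod.cong refl) (simp add: basis_idx_def permute_list_nth)
  also have "\<dots> = tensor_vec u n s xs"
    using prod.permute[OF assms(1), of "\<lambda>k. u (s ! k) (xs ! k)"] by (simp add: tensor_vec_def comp_def)
  finally show ?thesis .
qed

lemma diag_weight_permute_list:
  assumes p: "\<pi> permutes {..<n}" and inv: "perm_invariant D n \<rho>" and s: "s \<in> basis_idx D n"
  shows "diag_weight D u n \<rho> (permute_list \<pi> s) = diag_weight D u n \<rho> s"
proof -
  let ?F = "\<lambda>xs ys. cnj (tensor_vec u n (permute_list \<pi> s) xs) * \<rho> xs ys * tensor_vec u n (permute_list \<pi> s) ys"
  have "diag_weight D u n \<rho> (permute_list \<pi> s)
      = (\<Sum>xs\<in>basis_idx D n. \<Sum>ys\<in>basis_idx D n. ?F (permute_list \<pi> xs) (permute_list \<pi> ys))"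
    unfolding diag_weight_def
    by (subst sum_permute_list[OF p, symmetric], rule sum.cong[OF refl],
        subst sum_permute_list[OF p, symmetric], rule refl)
  also have "\<dots> = diag_weight D u n \<rho> s"
    using inv p s unfolding diag_weight_def perm_invariant_iff
    by (intro sum.cong refl) (simp add: tensor_vec_permute_list)
  finally show ?thesis .
qed

definition superposition ::
  "nat \<Rightarrow> (nat \<Rightarrow> nat \<Rightarrow> complex) \<Rightarrow> nat \<Rightarrow> (nat list \<Rightarrow> complex) \<Rightarrow> nat list \<Rightarrow> complex" where
  "superposition D u n w xs = (\<Sum>t\<in>basis_idx D n. w t * tensor_vec u n t xs)"

definition pure_state ::
  "nat \<Rightarrow> (nat \<Rightarrow> nat \<Rightarrow> complex) \<Rightarrow> nat \<Rightarrow> (nat list \<Rightarrow> complex) \<Rightarrow> nat list \<Rightarrow> nat list \<Rightarrow> complex" where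
  "pure_state D u n w xs ys = superposition D u n w xs * cnj (superposition D u n w ys)"

lemma coefficient_superposition:
  assumes orth: "orthonormal D D u" and s: "s \<in> basis_idx D n"
  shows "(\<Sum>xs\<in>basis_idx D n. cnj (tensor_vec u n s xs) * superposition D u n w xs) = w s"
proof -
  have "(\<Sum>xs\<in>basis_idx D n. cnj (tensor_vec u n s xs) * superposition D u n w xs)
      = (\<Sum>t\<in>basis_idx D n. w t * (\<Sum>xs\<in>basis_idx D n. cnj (tensor_vec u n s xs) * tensor_vec u n t xs))"
    unfolding superposition_def sum_distrib_left by (subst sum.swap) (simp add: ac_simps)
  also have "\<dots> = (\<Sum>t\<in>basis_idx D n. if t = s then w t else 0)"
    using tensor_vec_orthonormal[OF orth s] by (intro sum.cong refl) auto
  finally show ?thesis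
    using s by simp
qed

lemma diag_weight_pure_state:
  assumes "orthonormal D D u" and "s \<in> basis_idx D n"
  shows "diag_weight D u n (pure_state D u n w) s = w s * cnj (w s)"
proof -
  have "diag_weight D u n (pure_state D u n w) s
      = (\<Sum>xs\<in>basis_idx D n. cnj (tensor_vec u n s xs) * superposition D u n w xs)
      * (\<Sum>ys\<in>basis_idx D n. cnj (superposition D u n w ys) * tensor_vec u n s ys)"
    unfolding diag_weight_def pure_state_def sum_product by (simp only: ac_simps)
  also have "(\<Sum>ys\<in>basis_idx D n. cnj (superposition D u n w ys) * tensor_vec u n s ys)
      = cnj (\<Sum>ys\<in>basis_idx D n. cnj (tensor_vec u n s ys) * superposition D u n w ys)"
    by (simp add: mult.commute)
  finally show ?thesis
    by (simp only: coefficient_superposition[OF assms])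
qed

lemma density_op_pure_state:
  assumes orth: "orthonormal D D u" and norm: "(\<Sum>t\<in>basis_idx D n. w t * cnj (w t)) = 1"
  shows "density_op D n (pure_state D u n w)"
  unfolding density_op_def
proof (intro conjI ballI allI)
  fix xs ys
  show "pure_state D u n w ys xs = cnj (pure_state D u n w xs ys)"
    by (simp add: pure_state_def)
next
  fix v :: "nat list \<Rightarrow> complex"
  define z where "z = (\<Sum>xs\<in>basis_idx D n. cnj (v xs) * superposition D u n w xs)"
  have "(\<Sum>xs\<in>basis_idx D n. \<Sum>ys\<in>basis_idx D n. cnj (v xs) * pure_state D u n w xs ys * v ys)
      = z * (\<Sum>ys\<in>basis_idx D n. cnj (superposition D u n w ys) * v ys)"
    unfolding z_def pure_state_def sum_product by (simp only: ac_simps)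
  also have "(\<Sum>ys\<in>basis_idx D n. cnj (superposition D u n w ys) * v ys) = cnj z"
    by (simp add: z_def mult.commute)
  also have "z * cnj z = of_real ((Re z)\<^sup>2 + (Im z)\<^sup>2)"
    by (rule complex_mult_cnj)
  finally show "0 \<le> Re (\<Sum>xs\<in>basis_idx D n. \<Sum>ys\<in>basis_idx D n. cnj (v xs) * pure_state D u n w xs ys * v ys)"
    by simp
next
  have "(\<Sum>xs\<in>basis_idx D n. pure_state D u n w xs xs)
      = (\<Sum>s\<in>basis_idx D n. diag_weight D u n (pure_state D u n w) s)"
    by (rule sum_diag_weight[OF orth, symmetric])
  also have "\<dots> = 1"
    using norm diag_weight_pure_state[OF orth] by simp
  finally show "(\<Sum>xs\<in>basis_idx D n. pure_state D u n w xs xs) = 1" .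
qed

lemma perm_invariant_pure_state:
  assumes sym: "\<And>\<pi> t. \<pi> permutes {..<n} \<Longrightarrow> t \<in> basis_idx D n \<Longrightarrow> w (permute_list \<pi> t) = w t"
  shows "perm_invariant D n (pure_state D u n w)"
proof -
  have "superposition D u n w (permute_list \<pi> xs) = superposition D u n w xs"
    if p: "\<pi> permutes {..<n}" and xs: "xs \<in> basis_idx D n" for \<pi> xs
  proof -
    have "superposition D u n w (permute_list \<pi> xs)
        = (\<Sum>t\<in>basis_idx D n. w (permute_list \<pi> t) * tensor_vec u n (permute_list \<pi> t) (permute_list \<pi> xs))"
      unfolding superposition_def by (rule sum_permute_list[OF p, symmetric])
    also have "\<dots> = superposition D u n w xs"
      unfolding superposition_def using sym p xs by (intro sum.cong refl) (simp add: tensor_vec_permute_list)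
    finally show ?thesis .
  qed
  then show ?thesis
    unfolding perm_invariant_iff pure_state_def by simp
qed

definition uniform_state ::
  "nat \<Rightarrow> (nat \<Rightarrow> nat \<Rightarrow> complex) \<Rightarrow> nat \<Rightarrow> nat list set \<Rightarrow> nat list \<Rightarrow> nat list \<Rightarrow> complex" where
  "uniform_state D u n E = pure_state D u n (\<lambda>t. if t \<in> E then of_real (1 / sqrt (card E)) else 0)"

lemma uniform_state:
  assumes orth: "orthonormal D D u" and E: "E \<subseteq> basis_idx D n" "E \<noteq> {}"
    and closed: "\<And>\<pi> t. \<pi> permutes {..<n} \<Longrightarrow> t \<in> E \<Longrightarrow> permute_list \<pi> t \<in> E"
  shows uniform_state_density_op: "density_op D n (uniform_state D u n E)"
    and uniform_state_perm_invariant: "perm_invariant D n (uniform_state D u n E)"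
    and diag_weight_uniform_state: "\<And>s. s \<in> basis_idx D n \<Longrightarrow>
      Re (diag_weight D u n (uniform_state D u n E) s) = (if s \<in> E then 1 / card E else 0)"
proof -
  define w where "w t = (if t \<in> E then complex_of_real (1 / sqrt (card E)) else 0)" for t
  have w_sq: "w t * cnj (w t) = of_real (if t \<in> E then 1 / card E else 0)" for t
    by (simp add: w_def flip: of_real_mult add: real_sqrt_mult[symmetric])
  have "card E > 0"
    using E finite_subset[OF E(1)] by (simp add: card_gt_0_iff)
  then have "(\<Sum>t\<in>basis_idx D n. w t * cnj (w t)) = 1"
    using E(1) by (simp add: w_sq sum.If_cases Int_absorb1 flip: of_real_sum)
  then show "density_op D n (uniform_state D u n E)"
    unfolding uniform_state_def w_def[symmetric] by (rule density_op_pure_state[OF orth])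
  show "perm_invariant D n (uniform_state D u n E)"
    unfolding uniform_state_def w_def[symmetric]
    by (rule perm_invariant_pure_state) (simp add: w_def permute_list_mem_iff closed)
  show "Re (diag_weight D u n (uniform_state D u n E) s) = (if s \<in> E then 1 / card E else 0)"
    if "s \<in> basis_idx D n" for s
    unfolding uniform_state_def w_def[symmetric] diag_weight_pure_state[OF orth that] w_sq by simp
qed

section \<open>Symmetric weights constrained by \<open>f = 0\<close>\<close>

definition cofactor :: "(nat \<Rightarrow> real) \<Rightarrow> nat \<Rightarrow> nat list \<Rightarrow> nat \<Rightarrow> real" where
  "cofactor lam N s k = (\<Prod>j\<in>{..N} - {k}. lam (s ! j))"

lemma transpose_image_lessThan:
  fixes k N :: nat
  assumes "k \<le> N"
  shows "Transposition.transpose k N ` {..<N} = {..N} - {k}"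
  unfolding set_eq_iff in_transpose_image_iff using assms by (auto simp: Transposition.transpose_def)

lemma prod_permute_transpose:
  assumes "k \<le> N" and "length s = Suc N"
  shows "(\<Prod>j<N. lam (permute_list (Transposition.transpose k N) s ! j)) = cofactor lam N s k"
proof -
  have "Transposition.transpose k N permutes {..<length s}"
    using assms by (intro permutes_swap_id) auto
  then have "(\<Prod>j<N. lam (permute_list (Transposition.transpose k N) s ! j))
      = (\<Prod>j<N. lam (s ! Transposition.transpose k N j))"
    using assms by (intro prod.cong refl) (simp add: permute_list_nth)
  also have "\<dots> = (\<Prod>j\<in>Transposition.transpose k N ` {..<N}. lam (s ! j))"
    by (subst prod.reindex) (simp_all add: comp_def)
  finally show ?thesis
    using assms(1) by (simp add: transpose_image_lessThan cofactor_def)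
qed

lemma sum_symmetric_permute:
  assumes p: "\<pi> permutes {..<n}"
    and sym: "\<And>\<sigma> s. \<sigma> permutes {..<n} \<Longrightarrow> s \<in> basis_idx D n \<Longrightarrow> d (permute_list \<sigma> s) = d s"
  shows "(\<Sum>s\<in>basis_idx D n. F (permute_list \<pi> s) * d s) = (\<Sum>s\<in>basis_idx D n. F s * (d s :: real))"
proof -
  have "(\<Sum>s\<in>basis_idx D n. F (permute_list \<pi> s) * d s)
      = (\<Sum>s\<in>basis_idx D n. F (permute_list \<pi> s) * d (permute_list \<pi> s))"
    using sym[OF p] by simp
  also have "\<dots> = (\<Sum>s\<in>basis_idx D n. F s * d s)"
    by (rule sum_permute_list[OF p])
  finally show ?thesis .
qed

lemma sum_cofactor_vanishing_le_1:
  fixes lam :: "nat \<Rightarrow> real"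
  assumes s: "s \<in> basis_idx D (Suc N)" and range: "\<And>a. a < D \<Longrightarrow> 0 \<le> lam a \<and> lam a \<le> 1"
    and j: "j \<le> N" "lam (s ! j) = 0"
  shows "(\<Sum>k\<le>N. cofactor lam N s k) \<le> 1"
proof -
  have "cofactor lam N s k = 0" if "k \<le> N" "k \<noteq> j" for k
    unfolding cofactor_def using that j by (intro prod_zero) auto
  then have "(\<Sum>k\<le>N. cofactor lam N s k) = cofactor lam N s j"
    using j(1) by (subst sum.remove[of _ j]) auto
  also have "\<dots> \<le> 1"
    unfolding cofactor_def using range basis_idx_nth_less[OF s] by (intro prod_le_1) auto
  finally show ?thesis .
qed

lemma cofactor_le_power:
  fixes lam :: "nat \<Rightarrow> real"
  assumes s: "s \<in> basis_idx D (Suc N)" and range: "\<And>a. a < D \<Longrightarrow> 0 \<le> lam a \<and> lam a \<le> 1"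
    and le_beta: "\<And>a. 0 < a \<Longrightarrow> a < D \<Longrightarrow> lam a \<le> \<beta>"
    and nonzero: "\<And>j. j \<le> N \<Longrightarrow> s ! j \<noteq> 0" and k: "k \<le> N"
  shows "cofactor lam N s k \<le> \<beta> ^ N"
proof -
  have "cofactor lam N s k \<le> (\<Prod>j\<in>{..N} - {k}. \<beta>)"
    unfolding cofactor_def using range le_beta nonzero basis_idx_nth_less[OF s] by (intro prod_mono) auto
  also have "\<dots> = \<beta> ^ N"
    using k by (simp add: card_Diff_singleton)
  finally show ?thesis .
qed

lemma sum_cofactor_le:
  fixes lam :: "nat \<Rightarrow> real"
  assumes s: "s \<in> basis_idx D (Suc N)"
    and range: "\<And>a. a < D \<Longrightarrow> 0 \<le> lam a \<and> lam a \<le> 1"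
    and le_beta: "\<And>a. 0 < a \<Longrightarrow> a < D \<Longrightarrow> lam a \<le> \<beta>"
    and excl: "\<And>k. k \<le> N \<Longrightarrow> s ! k = 0 \<Longrightarrow> cofactor lam N s k = 0"
    and M: "\<beta> ^ N \<le> M" "(\<exists>a<D. lam a = 0) \<Longrightarrow> 1 / real (Suc N) \<le> M"
  shows "(\<Sum>k\<le>N. cofactor lam N s k) \<le> real (Suc N) * M"
proof (cases "\<exists>j\<le>N. lam (s ! j) = 0")
  case True
  then obtain j where j: "j \<le> N" "lam (s ! j) = 0" by blast
  have "(\<Sum>k\<le>N. cofactor lam N s k) \<le> 1"
    by (rule sum_cofactor_vanishing_le_1[where lam = lam, OF s range j])
  also have "\<dots> \<le> real (Suc N) * M"
    using M(2) j basis_idx_nth_less[OF s, of j] by (auto simp: field_simps)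
  finally show ?thesis .
next
  case False
  have "s ! j \<noteq> 0" if "j \<le> N" for j
  proof
    assume "s ! j = 0"
    then have "cofactor lam N s j = 0" by (rule excl[OF that])
    with False show False
      unfolding cofactor_def by (auto simp: prod_zero_iff)
  qed
  then have "(\<Sum>k\<le>N. cofactor lam N s k) \<le> (\<Sum>k\<le>N. \<beta> ^ N)"
    by (intro sum_mono cofactor_le_power[OF s range le_beta]) auto
  also have "\<dots> \<le> real (Suc N) * M"
    using M(1) by simp
  finally show ?thesis .
qed

lemma sum_cofactor_symmetric:
  fixes d :: "nat list \<Rightarrow> real"
  assumes sym: "\<And>\<pi> s. \<pi> permutes {..<Suc N} \<Longrightarrow> s \<in> basis_idx D (Suc N) \<Longrightarrow> d (permute_list \<pi> s) = d s"
    and k: "k \<le> N"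
  shows "(\<Sum>s\<in>basis_idx D (Suc N). cofactor lam N s k * F (s ! k) * d s)
    = (\<Sum>s\<in>basis_idx D (Suc N). (\<Prod>j<N. lam (s ! j)) * F (s ! N) * d s)"
proof -
  let ?\<tau> = "Transposition.transpose k N"
  have perm: "?\<tau> permutes {..<Suc N}"
    using k by (intro permutes_swap_id) auto
  have "(\<Prod>j<N. lam (permute_list ?\<tau> s ! j)) * F (permute_list ?\<tau> s ! N) = cofactor lam N s k * F (s ! k)"
    if "s \<in> basis_idx D (Suc N)" for s
    using that k perm prod_permute_transpose[of k N s lam] by (simp add: basis_idx_def permute_list_nth)
  then show ?thesis
    using sum_symmetric_permute[where D = D and F = "\<lambda>s. (\<Prod>j<N. lam (s ! j)) * F (s ! N)", OF perm sym]
    by simp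
qed

lemma symmetric_weight_exclusion:
  fixes d :: "nat list \<Rightarrow> real"
  assumes range: "\<And>a. a < D \<Longrightarrow> 0 \<le> lam a"
    and d_nonneg: "\<And>s. s \<in> basis_idx D (Suc N) \<Longrightarrow> 0 \<le> d s"
    and sym: "\<And>\<pi> s. \<pi> permutes {..<Suc N} \<Longrightarrow> s \<in> basis_idx D (Suc N) \<Longrightarrow> d (permute_list \<pi> s) = d s"
    and constraint: "(\<Sum>s\<in>basis_idx D (Suc N). (if s ! N = 0 then \<Prod>k<N. lam (s ! k) else 0) * d s) \<le> 0"
    and s: "s \<in> basis_idx D (Suc N)" "d s \<noteq> 0" and k: "k \<le> N" "s ! k = 0"
  shows "cofactor lam N s k = 0"
proof -
  let ?B = "basis_idx D (Suc N)"
  let ?f = "\<lambda>s. cofactor lam N s k * (if s ! k = 0 then 1 else 0) * d s"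
  have f_nonneg: "0 \<le> ?f s" if "s \<in> ?B" for s
    unfolding cofactor_def using that range d_nonneg basis_idx_nth_less[OF that]
    by (auto intro!: mult_nonneg_nonneg prod_nonneg)
  have "(\<Sum>s\<in>?B. ?f s) = (\<Sum>s\<in>?B. (\<Prod>k<N. lam (s ! k)) * (if s ! N = 0 then 1 else 0) * d s)"
    by (rule sum_cofactor_symmetric[OF sym k(1), where F = "\<lambda>x. if x = 0 then 1 else 0"])
  also have "\<dots> = (\<Sum>s\<in>?B. (if s ! N = 0 then \<Prod>k<N. lam (s ! k) else 0) * d s)"
    by (intro sum.cong) auto
  finally have "(\<Sum>s\<in>?B. ?f s) \<le> 0"
    using constraint by simp
  then have "(\<Sum>s\<in>?B. ?f s) = 0"
    using f_nonneg by (intro antisym sum_nonneg) auto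
  then have "?f s = 0"
    using s(1) f_nonneg by (subst (asm) sum_nonneg_eq_0_iff) auto
  with s(2) k(2) show ?thesis
    by simp
qed

lemma symmetric_weight_bound:
  fixes lam :: "nat \<Rightarrow> real" and d :: "nat list \<Rightarrow> real"
  assumes range: "\<And>a. a < D \<Longrightarrow> 0 \<le> lam a \<and> lam a \<le> 1"
    and le_beta: "\<And>a. 0 < a \<Longrightarrow> a < D \<Longrightarrow> lam a \<le> \<beta>"
    and M: "\<beta> ^ N \<le> M" "(\<exists>a<D. lam a = 0) \<Longrightarrow> 1 / real (Suc N) \<le> M"
    and d_nonneg: "\<And>s. s \<in> basis_idx D (Suc N) \<Longrightarrow> 0 \<le> d s"
    and d_sum: "(\<Sum>s\<in>basis_idx D (Suc N). d s) = 1"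
    and sym: "\<And>\<pi> s. \<pi> permutes {..<Suc N} \<Longrightarrow> s \<in> basis_idx D (Suc N) \<Longrightarrow> d (permute_list \<pi> s) = d s"
    and constraint: "(\<Sum>s\<in>basis_idx D (Suc N). (if s ! N = 0 then \<Prod>k<N. lam (s ! k) else 0) * d s) \<le> 0"
  shows "(\<Sum>s\<in>basis_idx D (Suc N). (\<Prod>k<N. lam (s ! k)) * d s) \<le> M"
proof -
  let ?B = "basis_idx D (Suc N)"
  have "real (Suc N) * (\<Sum>s\<in>?B. (\<Prod>k<N. lam (s ! k)) * d s)
      = (\<Sum>k\<le>N. \<Sum>s\<in>?B. cofactor lam N s k * d s)"
    using sum_cofactor_symmetric[OF sym, where lam = lam and F = "\<lambda>_. 1"] by simp
  also have "\<dots> = (\<Sum>s\<in>?B. (\<Sum>k\<le>N. cofactor lam N s k) * d s)"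
    by (subst sum.swap) (simp add: sum_distrib_right)
  also have "\<dots> \<le> (\<Sum>s\<in>?B. (real (Suc N) * M) * d s)"
  proof (rule sum_mono)
    fix s assume s: "s \<in> ?B"
    show "(\<Sum>k\<le>N. cofactor lam N s k) * d s \<le> (real (Suc N) * M) * d s"
    proof (cases "d s = 0")
      case False
      with s have "(\<Sum>k\<le>N. cofactor lam N s k) \<le> real (Suc N) * M"
        using range d_nonneg sym constraint
        by (intro sum_cofactor_le[OF s range le_beta _ M] symmetric_weight_exclusion) auto
      then show ?thesis
        using d_nonneg[OF s] by (rule mult_right_mono)
    qed simp
  qed
  also have "\<dots> = real (Suc N) * M"
    by (simp add: d_sum flip: sum_distrib_left)
  finally show ?thesis
    by simp
qed

section \<open>Verification operators\<close>

locale verification_frame =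
  fixes D :: nat and \<Omega> :: "nat \<Rightarrow> nat \<Rightarrow> complex" and \<Psi> :: "nat \<Rightarrow> complex"
    and u :: "nat \<Rightarrow> nat \<Rightarrow> complex" and lam :: "nat \<Rightarrow> real"
  assumes orthonormal_basis: "orthonormal D D u"
    and decomposition: "\<And>i j. i < D \<Longrightarrow> j < D \<Longrightarrow> \<Omega> i j = (\<Sum>a<D. of_real (lam a) * u a i * cnj (u a j))"
    and first_vector: "u 0 = \<Psi>"
    and first_eigenvalue: "lam 0 = 1"
    and eigenvalue_range: "\<And>a. a < D \<Longrightarrow> 0 \<le> lam a \<and> lam a \<le> 1"
begin

lemma trace_tensor_op:
  assumes P: "\<And>i j. i < D \<Longrightarrow> j < D \<Longrightarrow> P i j = (\<Sum>a<D. c a * u a i * cnj (u a j))"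
  shows "trace_prod D (Suc N) (tensor_op N \<Omega> P) \<rho> = (\<Sum>s\<in>basis_idx D (Suc N).
    (of_real (\<Prod>k<N. lam (s ! k)) * c (s ! N)) * diag_weight D u (Suc N) \<rho> s)"
proof (rule trace_prod_diagonal)
  fix xs ys assume xs: "xs \<in> basis_idx D (Suc N)" and ys: "ys \<in> basis_idx D (Suc N)"
  define M where "M k = (if k < N then \<Omega> else P)" for k
  define m where "m k a = (if k < N then of_real (lam a) else c a)" for k a
  have "tensor_op N \<Omega> P xs ys = (\<Prod>k<Suc N. M k (xs ! k) (ys ! k))"
    by (simp add: tensor_op_def M_def)
  also have "\<dots> = (\<Sum>s\<in>basis_idx D (Suc N).
      (\<Prod>k<Suc N. m k (s ! k)) * tensor_vec u (Suc N) s xs * cnj (tensor_vec u (Suc N) s ys))"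
    by (rule tensor_op_decomposition[OF _ xs ys]) (simp add: M_def m_def decomposition P)
  finally show "tensor_op N \<Omega> P xs ys = (\<Sum>s\<in>basis_idx D (Suc N).
      (of_real (\<Prod>k<N. lam (s ! k)) * c (s ! N)) * tensor_vec u (Suc N) s xs * cnj (tensor_vec u (Suc N) s ys))"
    by (simp add: m_def)
qed

lemma p_rho_eq:
  "p_rho D N \<Omega> \<rho> = (\<Sum>s\<in>basis_idx D (Suc N). (\<Prod>k<N. lam (s ! k)) * Re (diag_weight D u (Suc N) \<rho> s))"
proof -
  have "trace_prod D (Suc N) (tensor_op N \<Omega> identity_op) \<rho> = (\<Sum>s\<in>basis_idx D (Suc N).
      (of_real (\<Prod>k<N. lam (s ! k)) * 1) * diag_weight D u (Suc N) \<rho> s)"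
    by (rule trace_tensor_op)
      (use orthonormal_complete[OF orthonormal_basis] in \<open>simp add: identity_op_def\<close>)
  then show ?thesis
    by (simp add: p_rho_def Re_sum del: of_real_prod)
qed

lemma f_rho_eq:
  "f_rho D N \<Omega> \<Psi> \<rho> = (\<Sum>s\<in>basis_idx D (Suc N).
     (if s ! N = 0 then \<Prod>k<N. lam (s ! k) else 0) * Re (diag_weight D u (Suc N) \<rho> s))"
proof -
  have "proj \<Psi> i j = (\<Sum>a<D. (if a = 0 then 1 else 0) * u a i * cnj (u a j))" if "i < D" for i j
  proof -
    have "(\<Sum>a<D. (if a = 0 then 1 else 0) * u a i * cnj (u a j))
        = (\<Sum>a<D. if a = 0 then u a i * cnj (u a j) else 0)"
      by (intro sum.cong) auto
    with that show ?thesis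
      by (simp add: proj_def first_vector)
  qed
  then have "trace_prod D (Suc N) (tensor_op N \<Omega> (proj \<Psi>)) \<rho> = (\<Sum>s\<in>basis_idx D (Suc N).
      (of_real (\<Prod>k<N. lam (s ! k)) * (if s ! N = 0 then 1 else 0)) * diag_weight D u (Suc N) \<rho> s)"
    by (intro trace_tensor_op)
  then show ?thesis
    by (auto simp: f_rho_def Re_sum intro!: sum.cong simp del: of_real_prod)
qed

lemma eta_set_le:
  assumes y: "y \<in> eta_set D N 0 \<Omega> \<Psi>"
    and le_beta: "\<And>a. 0 < a \<Longrightarrow> a < D \<Longrightarrow> lam a \<le> \<beta>"
    and M: "\<beta> ^ N \<le> M" "(\<exists>a<D. lam a = 0) \<Longrightarrow> 1 / real (Suc N) \<le> M"
  shows "y \<le> M"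
proof -
  obtain \<rho> where y_eq: "y = p_rho D N \<Omega> \<rho>" and \<rho>: "density_op D (Suc N) \<rho>"
    "perm_invariant D (Suc N) \<rho>" and f: "f_rho D N \<Omega> \<Psi> \<rho> \<le> 0"
    using y unfolding eta_set_def by auto
  define d where "d s = Re (diag_weight D u (Suc N) \<rho> s)" for s
  have "(\<Sum>s\<in>basis_idx D (Suc N). d s) = Re (\<Sum>xs\<in>basis_idx D (Suc N). \<rho> xs xs)"
    unfolding d_def Re_sum[symmetric] sum_diag_weight[OF orthonormal_basis] ..
  also have "\<dots> = 1"
    using \<rho>(1) unfolding density_op_def by (metis one_complex.sel(1))
  finally have d_sum: "(\<Sum>s\<in>basis_idx D (Suc N). d s) = 1" .
  have d_nonneg: "0 \<le> d s" if "s \<in> basis_idx D (Suc N)" for s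
    unfolding d_def by (rule diag_weight_nonneg[OF \<rho>(1)])
  have d_sym: "d (permute_list \<pi> s) = d s"
    if "\<pi> permutes {..<Suc N}" "s \<in> basis_idx D (Suc N)" for \<pi> s
    unfolding d_def using diag_weight_permute_list[OF that(1) \<rho>(2) that(2)] by simp
  have constraint: "(\<Sum>s\<in>basis_idx D (Suc N). (if s ! N = 0 then \<Prod>k<N. lam (s ! k) else 0) * d s) \<le> 0"
    using f by (simp add: f_rho_eq d_def)
  have "(\<Sum>s\<in>basis_idx D (Suc N). (\<Prod>k<N. lam (s ! k)) * d s) \<le> M"
    by (rule symmetric_weight_bound[OF eigenvalue_range le_beta M d_nonneg d_sum d_sym constraint])
  then show ?thesis
    by (simp add: y_eq p_rho_eq d_def)
qed

lemma uniform_state_in_eta_set: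
  assumes E: "E \<subseteq> basis_idx D (Suc N)" "E \<noteq> {}"
    and closed: "\<And>\<pi> t. \<pi> permutes {..<Suc N} \<Longrightarrow> t \<in> E \<Longrightarrow> permute_list \<pi> t \<in> E"
    and excl: "\<And>s. s \<in> E \<Longrightarrow> s ! N = 0 \<Longrightarrow> (\<Prod>k<N. lam (s ! k)) = 0"
  shows "(\<Sum>s\<in>E. \<Prod>k<N. lam (s ! k)) / card E \<in> eta_set D N 0 \<Omega> \<Psi>"
proof -
  let ?\<rho> = "uniform_state D u (Suc N) E"
  have weight: "Re (diag_weight D u (Suc N) ?\<rho> s) = (if s \<in> E then 1 / card E else 0)"
    if "s \<in> basis_idx D (Suc N)" for s
    by (rule diag_weight_uniform_state[OF orthonormal_basis E closed that])
  have "p_rho D N \<Omega> ?\<rho> = (\<Sum>s\<in>basis_idx D (Suc N). if s \<in> E then (\<Prod>k<N. lam (s ! k)) / card E else 0)"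
    unfolding p_rho_eq by (intro sum.cong refl) (simp add: weight)
  also have "\<dots> = (\<Sum>s\<in>E. \<Prod>k<N. lam (s ! k)) / card E"
    using E(1) by (simp add: sum.If_cases Int_absorb1 sum_divide_distrib)
  finally have p: "p_rho D N \<Omega> ?\<rho> = (\<Sum>s\<in>E. \<Prod>k<N. lam (s ! k)) / card E" .
  have f: "f_rho D N \<Omega> \<Psi> ?\<rho> = 0"
    unfolding f_rho_eq using E(1) excl by (intro sum.neutral) (auto simp: weight)
  show ?thesis
    unfolding eta_set_def mem_Collect_eq
    using uniform_state_density_op[OF orthonormal_basis E closed]
      uniform_state_perm_invariant[OF orthonormal_basis E closed]
    by (intro exI[of _ ?\<rho>] conjI) (simp_all add: p f)
qed

end

definition single_excitation :: "nat \<Rightarrow> nat \<Rightarrow> nat \<Rightarrow> nat list" where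
  "single_excitation n z k = (replicate n 0)[k := z]"

lemma length_single_excitation [simp]: "length (single_excitation n z k) = n"
  by (simp add: single_excitation_def)

lemma nth_single_excitation: "j < n \<Longrightarrow> single_excitation n z k ! j = (if j = k then z else 0)"
  by (simp add: single_excitation_def nth_list_update)

lemma single_excitation_basis_idx:
  "z < D \<Longrightarrow> single_excitation n z k \<in> basis_idx D n"
  by (auto simp: basis_idx_def in_set_conv_nth nth_single_excitation)

lemma inj_on_single_excitation: "z \<noteq> 0 \<Longrightarrow> inj_on (single_excitation n z) {..<n}"
  by (rule inj_onI) (metis lessThan_iff nth_single_excitation)

lemma permute_list_single_excitation:
  assumes "\<sigma> permutes {..<n}"
  shows "permute_list \<sigma> (single_excitation n z k) = single_excitation n z (inv \<sigma> k)"
proof (rule nth_equalityI)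
  fix j assume "j < length (permute_list \<sigma> (single_excitation n z k))"
  then have j: "j < n" by simp
  have "\<sigma> j = k \<longleftrightarrow> j = inv \<sigma> k"
    using permutes_inverses[OF assms] by metis
  then show "permute_list \<sigma> (single_excitation n z k) ! j = single_excitation n z (inv \<sigma> k) ! j"
    using j assms permutes_in_image[OF assms, of j]
    by (simp add: permute_list_nth nth_single_excitation)
qed simp

lemma prod_single_excitation:
  fixes lam :: "nat \<Rightarrow> real"
  assumes "lam z = 0" and "k \<le> N"
  shows "(\<Prod>j<N. lam (single_excitation (Suc N) z k ! j)) = (if k = N then lam 0 ^ N else 0)"
proof (cases "k = N")
  case True
  then have "(\<Prod>j<N. lam (single_excitation (Suc N) z k ! j)) = (\<Prod>j<N. lam 0)"
    by (intro prod.cong) (auto simp: nth_single_excitation)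
  with True show ?thesis
    by simp
next
  case False
  with assms have "k < N" "lam (single_excitation (Suc N) z k ! k) = 0"
    by (auto simp: nth_single_excitation)
  then have "(\<Prod>j<N. lam (single_excitation (Suc N) z k ! j)) = 0"
    by (subst prod_zero_iff) auto
  with False show ?thesis
    by simp
qed

context verification_frame
begin

lemma eigenvalue_power_in_eta_set:
  assumes "0 < b" "b < D"
  shows "lam b ^ N \<in> eta_set D N 0 \<Omega> \<Psi>"
proof -
  let ?r = "replicate (Suc N) b"
  have "permute_list \<pi> ?r = ?r" if "\<pi> permutes {..<Suc N}" for \<pi>
    using that permutes_in_image[OF that] by (intro nth_equalityI) (simp_all add: permute_list_nth del: replicate_Suc)
  then have "(\<Sum>s\<in>{?r}. \<Prod>k<N. lam (s ! k)) / card {?r} \<in> eta_set D N 0 \<Omega> \<Psi>"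
    using assms by (intro uniform_state_in_eta_set) (auto simp: basis_idx_def simp del: replicate_Suc)
  moreover have "(\<Prod>k<N. lam (?r ! k)) = (\<Prod>k<N. lam b)"
    by (intro prod.cong) (auto simp del: replicate_Suc)
  ultimately show ?thesis
    by simp
qed

lemma inverse_in_eta_set:
  assumes z: "z < D" "lam z = 0"
  shows "1 / real (N + 1) \<in> eta_set D N 0 \<Omega> \<Psi>"
proof -
  let ?e = "single_excitation (Suc N) z"
  have "z \<noteq> 0"
    using z first_eigenvalue by (metis zero_neq_one)
  have L: "(\<Prod>j<N. lam (?e k ! j)) = (if k = N then 1 else 0)" if "k < Suc N" for k
    using prod_single_excitation[where lam = lam, OF z(2), of k N] that by (simp add: first_eigenvalue)
  have closed: "permute_list \<pi> t \<in> ?e ` {..<Suc N}"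
    if "\<pi> permutes {..<Suc N}" "t \<in> ?e ` {..<Suc N}" for \<pi> t
    using that permutes_in_image[OF permutes_inv[OF that(1)]]
    by (auto simp: permute_list_single_excitation)
  have "(\<Sum>s\<in>?e ` {..<Suc N}. \<Prod>k<N. lam (s ! k)) / card (?e ` {..<Suc N}) \<in> eta_set D N 0 \<Omega> \<Psi>"
  proof (rule uniform_state_in_eta_set[OF _ _ closed])
    show "?e ` {..<Suc N} \<subseteq> basis_idx D (Suc N)" "?e ` {..<Suc N} \<noteq> {}"
      using z by (auto simp: single_excitation_basis_idx)
    fix s assume "s \<in> ?e ` {..<Suc N}" and "s ! N = 0"
    then obtain k where "k < Suc N" "s = ?e k" "k \<noteq> N"
      using \<open>z \<noteq> 0\<close> by (auto simp: nth_single_excitation split: if_split_asm)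
    then show "(\<Prod>k<N. lam (s ! k)) = 0"
      using L by simp
  qed
  moreover have "(\<Sum>s\<in>?e ` {..<Suc N}. \<Prod>k<N. lam (s ! k)) = 1"
    using L by (simp add: sum.reindex[OF inj_on_single_excitation[OF \<open>z \<noteq> 0\<close>]])
  moreover have "card (?e ` {..<Suc N}) = N + 1"
    by (simp add: card_image[OF inj_on_single_excitation[OF \<open>z \<noteq> 0\<close>]])
  ultimately show ?thesis
    by simp
qed

lemma eta_set_max:
  assumes le_beta: "\<And>a. 0 < a \<Longrightarrow> a < D \<Longrightarrow> lam a \<le> \<beta>" and b: "0 < b" "b < D" "lam b = \<beta>"
  shows "is_max_of (eta_set D N 0 \<Omega> \<Psi>)
    (if \<exists>z<D. lam z = 0 then max (\<beta> ^ N) (1 / real (N + 1)) else \<beta> ^ N)"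
proof -
  have beta_in: "\<beta> ^ N \<in> eta_set D N 0 \<Omega> \<Psi>"
    using eigenvalue_power_in_eta_set[OF b(1,2)] b(3) by simp
  show ?thesis
  proof (cases "\<exists>z<D. lam z = 0")
    case True
    then have "1 / real (N + 1) \<in> eta_set D N 0 \<Omega> \<Psi>"
      using inverse_in_eta_set by blast
    with beta_in have "max (\<beta> ^ N) (1 / real (N + 1)) \<in> eta_set D N 0 \<Omega> \<Psi>"
      by (simp add: max_def)
    moreover have "y \<le> max (\<beta> ^ N) (1 / real (N + 1))" if "y \<in> eta_set D N 0 \<Omega> \<Psi>" for y
      by (rule eta_set_le[OF that le_beta]) simp_all
    ultimately show ?thesis
      unfolding if_P[OF True] is_max_of_def by blast
  next
    case False
    then have "y \<le> \<beta> ^ N" if "y \<in> eta_set D N 0 \<Omega> \<Psi>" for y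
      using eta_set_le[OF that le_beta order_refl] by blast
    with beta_in show ?thesis
      unfolding if_not_P[OF False] is_max_of_def by blast
  qed
qed

end

lemma verification_operator_frame:
  assumes psi: "sqnorm D \<Psi> = 1" and vo: "verification_operator D \<Omega> \<Psi>"
    and sl: "second_largest_eigenvalue D \<Omega> \<beta>" and se: "smallest_eigenvalue D \<Omega> \<tau>"
  obtains u lam where "verification_frame D \<Omega> \<Psi> u lam"
    and "\<forall>a. 0 < a \<and> a < D \<longrightarrow> lam a \<le> \<beta>" and "\<exists>b. 0 < b \<and> b < D \<and> lam b = \<beta>"
    and "\<forall>a<D. \<tau> \<le> lam a" and "\<exists>z<D. lam z = \<tau>"
proof -
  have herm: "hermitian D \<Omega>"
    and bounds: "\<And>v. 0 \<le> Re (qform D \<Omega> v) \<and> Re (qform D \<Omega> v) \<le> sqnorm D v"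
    and eig_psi: "\<forall>i<D. apply_op D \<Omega> \<Psi> i = of_real 1 * \<Psi> i"
    and nondeg: "\<And>v. \<forall>i<D. apply_op D \<Omega> v i = v i \<Longrightarrow> \<exists>c. \<forall>i<D. v i = c * \<Psi> i"
    using vo unfolding verification_operator_def by auto
  have "1 \<le> D"
    using psi by (cases D) (auto simp: sqnorm_def)
  then obtain u lam where u0: "u 0 = \<Psi>" and lam0: "lam 0 = 1" and orth: "orthonormal D D u"
    and eig: "\<forall>a<D. \<forall>i<D. apply_op D \<Omega> (u a) i = of_real (lam a) * u a i"
    using hermitian_orthonormal_eigenvectors[OF herm psi eig_psi] by blast
  have range: "0 \<le> lam a \<and> lam a \<le> 1" if "a < D" for a
    using bounds[of "u a"] qform_eigenbasis[OF orth eig that] orthonormal_sqnorm[OF orth that] by simp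
  have is_eig: "is_eigenvalue D \<Omega> (of_real (lam a))" if "a < D" for a
    by (rule eigenbasis_is_eigenvalue[OF orth eig that])
  have not_one: "lam a \<noteq> 1" if "0 < a" "a < D" for a
    using nondeg u0 by (intro eigenbasis_eigenvalue_ne_first[OF orth eig _ that]) auto
  have "verification_frame D \<Omega> \<Psi> u lam"
    by unfold_locales (use orth eigenbasis_decomposition[OF orth eig] u0 lam0 range in auto)
  moreover have "\<forall>a. 0 < a \<and> a < D \<longrightarrow> lam a \<le> \<beta>"
    using sl is_eig not_one unfolding second_largest_eigenvalue_def by blast
  moreover have "\<exists>b. 0 < b \<and> b < D \<and> lam b = \<beta>"
  proof -
    obtain b where "b < D" "lam b = \<beta>"
      using sl eigenvalue_in_eigenbasis[OF herm orth eig] unfolding second_largest_eigenvalue_def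
      by (metis of_real_eq_iff)
    moreover have "\<beta> \<noteq> 1"
      using sl unfolding second_largest_eigenvalue_def by blast
    then have "b \<noteq> 0"
      using lam0 \<open>lam b = \<beta>\<close> by (intro notI) simp
    ultimately show ?thesis
      by blast
  qed
  moreover have "\<forall>a<D. \<tau> \<le> lam a"
    using se is_eig unfolding smallest_eigenvalue_def by fastforce
  moreover have "\<exists>z<D. lam z = \<tau>"
    using se eigenvalue_in_eigenbasis[OF herm orth eig] unfolding smallest_eigenvalue_def
    by (metis of_real_eq_iff)
  ultimately show ?thesis
    using that by blast
qed

theorem lemma1:
  fixes D N :: nat and \<Omega> :: "nat \<Rightarrow> nat \<Rightarrow> complex" and \<Psi> :: "nat \<Rightarrow> complex"
    and \<beta> \<tau> :: real
  assumes "D \<ge> 2"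
    and "sqnorm D \<Psi> = 1"
    and "verification_operator D \<Omega> \<Psi>"
    and "second_largest_eigenvalue D \<Omega> \<beta>"
    and "smallest_eigenvalue D \<Omega> \<tau>"
    and "N \<ge> 1"
  shows "is_max_of (eta_set D N 0 \<Omega> \<Psi>)
           (if \<tau> > 0 then \<beta> ^ N else max (\<beta> ^ N) (1 / real (N + 1)))"
proof -
  obtain u lam where "verification_frame D \<Omega> \<Psi> u lam"
    and le_beta: "\<forall>a. 0 < a \<and> a < D \<longrightarrow> lam a \<le> \<beta>" and beta: "\<exists>b. 0 < b \<and> b < D \<and> lam b = \<beta>"
    and le_lam: "\<forall>a<D. \<tau> \<le> lam a" and tau: "\<exists>z<D. lam z = \<tau>"
    using verification_operator_frame[OF assms(2-5)] by blast
  interpret verification_frame D \<Omega> \<Psi> u lam by fact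
  have "(\<exists>z<D. lam z = 0) \<longleftrightarrow> \<not> \<tau> > 0"
    using le_lam tau eigenvalue_range by force
  with le_beta beta eta_set_max[of \<beta>] show ?thesis
    by auto
qed

end
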